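(* Let $R$ be a localizable archimedean partially ordered commutative ring and $s\in\mathrm{Loc}(R)$. Then $\mathrm{O}_{s<\infty}=\operatorname{dom}\widehat s_{\max}$.
   Context: Rings are commutative with unit; ring morphisms are unital. A partially ordered commutative ring is a commutative ring $R$ with partial order $\le$, $r\le s\Rightarrow r+t\le s+t$, positive cone $R^+$ closed under multiplication and containing all squares. $\mathbb{N}=\{1,2,\dots\}$, $\mathbb{N}_0=\mathbb{N}\cup\{0\}$. Archimedean: $kg+h\in R^+$ for all $k\in\mathbb{N}$ implies $g\in R^+$. $\mathrm{Loc}(R)$: the $s\in1+R^+$ with $rs\in R^+\Rightarrow r\in R^+$ for all $r$; localizable: each $r$ satisfies $-s\le r\le s$ for some $s\in\mathrm{Loc}(R)$. $\mathscr{C}_{\mathrm{a.e.}}(X)$ for a topological space $X$: continuous real functions defined on dense open subsets of $X$, modulo agreement on a dense open subset of the common domain, with pointwise operations on the intersection of domains. Each $a\in\mathscr{C}_{\mathrm{a.e.}}(X)$ has a unique representative $a_{\max}$ whose domain contains the domain of every representative and which restricts to each representative. $R_{\mathrm{loc}}$: fractions $r/s$ ($r\in R$, $s\in\mathrm{Loc}(R)$), $r/s=r'/s'$ iff $rs'=r's$, ordered by $p/q\le r/s$ iff $ps\le rq$. $R^{\mathrm{bd}}_{\mathrm{loc}}=\{a:\exists n\in\mathbb{N}_0,\ -n\le a\le n\}$. $\mathcal{K}(R)$: ring morphisms $\varphi\colon R^{\mathrm{bd}}_{\mathrm{loc}}\to\mathbb{R}$ with $\varphi(a)\ge0$ for $a\ge0$,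 weak-$*$ topology. $\mathrm{O}_{s<\infty}=\{\varphi:\varphi(1/s)>0\}$; for archimedean localizable $R$ these are dense open in $\mathcal{K}(R)$. For $r\in R$, $\widehat r\in\mathscr{C}_{\mathrm{a.e.}}(\mathcal{K}(R))$ is the class of $r_t\colon\mathrm{O}_{t<\infty}\to\mathbb{R}$, $\varphi\mapsto\varphi(1/t)^{-1}\varphi(r/t)$, for any $t\in\mathrm{Loc}(R)$ with $r/t\in R^{\mathrm{bd}}_{\mathrm{loc}}$ (independent of $t$). *)

theory Defs
  imports "HOL-Analysis.Analysis"
begin

(* A partially ordered commutative ring is given by its positive cone P = R^+;
   the order is  r \<le> s  iff  s - r \<in> P. *)
definition po_cring :: "'a::comm_ring_1 set \<Rightarrow> bool" where
  "po_cring P \<longleftrightarrow>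
     (\<forall>a\<in>P. \<forall>b\<in>P. a + b \<in> P) \<and>
     (\<forall>a\<in>P. \<forall>b\<in>P. a * b \<in> P) \<and>
     (\<forall>a. a * a \<in> P) \<and>
     (\<forall>a. a \<in> P \<and> - a \<in> P \<longrightarrow> a = 0)"

definition archimedean_cone :: "'a::comm_ring_1 set \<Rightarrow> bool" where
  "archimedean_cone P \<longleftrightarrow>
     (\<forall>g h. (\<forall>k::nat. k \<ge> 1 \<longrightarrow> of_nat k * g + h \<in> P) \<longrightarrow> g \<in> P)"

definition Loc :: "'a::comm_ring_1 set \<Rightarrow> 'a set" where
  "Loc P = {s. s - 1 \<in> P \<and> (\<forall>r. r * s \<in> P \<longrightarrow> r \<in> P)}"

definition localizable :: "'a::comm_ring_1 set \<Rightarrow> bool" where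
  "localizable P \<longleftrightarrow> (\<forall>r. \<exists>s\<in>Loc P. r + s \<in> P \<and> s - r \<in> P)"

(* Fractions r/s are represented by pairs (r,s) with s \<in> Loc P *)
definition frac_eq :: "'a::comm_ring_1 \<times> 'a \<Rightarrow> 'a \<times> 'a \<Rightarrow> bool" where
  "frac_eq x y \<longleftrightarrow> fst x * snd y = fst y * snd x"

definition frac_le :: "'a::comm_ring_1 set \<Rightarrow> 'a \<times> 'a \<Rightarrow> 'a \<times> 'a \<Rightarrow> bool" where
  "frac_le P x y \<longleftrightarrow> fst y * snd x - fst x * snd y \<in> P"

definition frac_add :: "'a::comm_ring_1 \<times> 'a \<Rightarrow> 'a \<times> 'a \<Rightarrow> 'a \<times> 'a" where
  "frac_add x y = (fst x * snd y + fst y * snd x, snd x * snd y)"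

definition frac_mult :: "'a::comm_ring_1 \<times> 'a \<Rightarrow> 'a \<times> 'a \<Rightarrow> 'a \<times> 'a" where
  "frac_mult x y = (fst x * fst y, snd x * snd y)"

definition bdloc :: "'a::comm_ring_1 set \<Rightarrow> ('a \<times> 'a) set" where
  "bdloc P = {x. snd x \<in> Loc P \<and>
      (\<exists>n::nat. frac_le P (- of_nat n, 1) x \<and> frac_le P x (of_nat n, 1))}"

(* K(R): positive unital ring morphisms R_loc^bd \<rightarrow> \<real>, represented as functions on
   representing pairs, compatible with equality of fractions, and normalised to 0
   outside R_loc^bd. *)
definition Kchar :: "'a::comm_ring_1 set \<Rightarrow> ('a \<times> 'a \<Rightarrow> real) set" where
  "Kchar P = {\<phi>.
     (\<forall>x\<in>bdloc P. \<forall>y\<in>bdloc P. frac_eq x y \<longrightarrow> \<phi> x = \<phi> y) \<and>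
     \<phi> (1, 1) = 1 \<and>
     (\<forall>x\<in>bdloc P. \<forall>y\<in>bdloc P. \<phi> (frac_add x y) = \<phi> x + \<phi> y) \<and>
     (\<forall>x\<in>bdloc P. \<forall>y\<in>bdloc P. \<phi> (frac_mult x y) = \<phi> x * \<phi> y) \<and>
     (\<forall>x\<in>bdloc P. frac_le P (0, 1) x \<longrightarrow> \<phi> x \<ge> 0) \<and>
     (\<forall>x. x \<notin> bdloc P \<longrightarrow> \<phi> x = 0)}"

(* weak-* topology = topology of pointwise convergence *)
definition Ktop :: "'a::comm_ring_1 set \<Rightarrow> ('a \<times> 'a \<Rightarrow> real) topology" where
  "Ktop P = subtopology (powertop_real UNIV) (Kchar P)"

definition Oinf :: "'a::comm_ring_1 set \<Rightarrow> 'a \<Rightarrow> ('a \<times> 'a \<Rightarrow> real) set" where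
  "Oinf P s = {\<phi> \<in> Kchar P. \<phi> (1, s) > 0}"

definition rt :: "'a::comm_ring_1 \<Rightarrow> 'a \<Rightarrow> ('a \<times> 'a \<Rightarrow> real) \<Rightarrow> real" where
  "rt r t \<phi> = inverse (\<phi> (1, t)) * \<phi> (r, t)"

(* C_ae(X): representatives are pairs (U,f), U dense open, f continuous on U *)
definition ae_rep :: "'b topology \<Rightarrow> 'b set \<times> ('b \<Rightarrow> real) \<Rightarrow> bool" where
  "ae_rep X a \<longleftrightarrow> openin X (fst a) \<and> X closure_of (fst a) = topspace X \<and>
     continuous_map (subtopology X (fst a)) euclideanreal (snd a)"

definition ae_eq :: "'b topology \<Rightarrow> 'b set \<times> ('b \<Rightarrow> real) \<Rightarrow> 'b set \<times> ('b \<Rightarrow> real) \<Rightarrow> bool" where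
  "ae_eq X a b \<longleftrightarrow> (\<exists>W. openin X W \<and> W \<subseteq> fst a \<inter> fst b \<and>
     (subtopology X (fst a \<inter> fst b)) closure_of W = fst a \<inter> fst b \<and>
     (\<forall>x\<in>W. snd a x = snd b x))"

definition ae_max_dom :: "'b topology \<Rightarrow> 'b set \<times> ('b \<Rightarrow> real) \<Rightarrow> 'b set" where
  "ae_max_dom X a = (THE U. \<exists>f. ae_rep X (U, f) \<and> ae_eq X (U, f) a \<and>
     (\<forall>V g. ae_rep X (V, g) \<and> ae_eq X (V, g) a \<longrightarrow> V \<subseteq> U \<and> (\<forall>x\<in>V. f x = g x)))"

(* a representative of \<widehat>r: r_t on O_{t<\<infinity>} for some t \<in> Loc with r/t bounded *)
definition hat_rep :: "'a::comm_ring_1 set \<Rightarrow> 'a \<Rightarrow> ('a \<times> 'a \<Rightarrow> real) set \<times> (('a \<times> 'a \<Rightarrow> real) \<Rightarrow> real)" where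
  "hat_rep P r = (let t = (SOME t. t \<in> Loc P \<and> (r, t) \<in> bdloc P) in (Oinf P t, rt r t))"

end

theory Submission
  imports Defs
begin

text \<open>Write \<open>O\<^sub>t\<close> for \<open>O\<^sub>t\<^sub><\<^sub>\<infinity>\<close>. A representative \<open>(V, g)\<close> of \<open>\<widehat>s\<close> agrees with
  \<open>\<phi> \<mapsto> 1 / \<phi>(1/s)\<close> on a subset \<open>W\<close> that is dense in \<open>V \<inter> O\<^sub>t\<close>, hence dense in \<open>V\<close> because
  \<open>O\<^sub>t\<close> is dense. As \<open>1 / \<phi>(1/s)\<close> is unbounded near every zero of \<open>\<phi>(1/s)\<close>, continuity of \<open>g\<close>
  forces \<open>V \<subseteq> O\<^sub>s\<close>, and then \<open>g = 1 / \<phi>(1/s)\<close> on \<open>V\<close>; conversely this function on \<open>O\<^sub>s\<close> is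
  itself a representative.

  The substantial ingredient is the density of every \<open>O\<^sub>t\<close> in \<open>K(R)\<close>. It comes from the
  Kadison--Dubois representation theorem for the archimedean preordering of the bounded fractions
  \<open>R\<^sup>b\<^sup>d\<^sub>l\<^sub>o\<^sub>c\<close>, realised inside a ring of fractions, in a sharpened form: characters
  close to a given one can be chosen positive at the faithful element \<open>1/t\<close>.\<close>

section \<open>Fractions with non-zero-divisor denominators\<close>

definition non_zero_divisor :: "'a::comm_ring_1 \<Rightarrow> bool" where
  "non_zero_divisor s \<longleftrightarrow> (\<forall>x. x * s = 0 \<longrightarrow> x = 0)"

lemma non_zero_divisor_1 [simp]: "non_zero_divisor 1"
  by (simp add: non_zero_divisor_def)

lemma non_zero_divisor_mult [simp]:
  "non_zero_divisor a \<Longrightarrow> non_zero_divisor b \<Longrightarrow> non_zero_divisor (a * b)"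
  unfolding non_zero_divisor_def by (metis mult.assoc)

lemma non_zero_divisor_cancel: "non_zero_divisor c \<Longrightarrow> a * c = b * c \<Longrightarrow> a = b"
  unfolding non_zero_divisor_def by (metis eq_iff_diff_eq_0 left_diff_distrib)

definition frac_rel :: "'a::comm_ring_1 \<times> 'a \<Rightarrow> 'a \<times> 'a \<Rightarrow> bool" where [simp]:
  "frac_rel x y \<longleftrightarrow> non_zero_divisor (snd x) \<and> non_zero_divisor (snd y) \<and>
     fst x * snd y = fst y * snd x"

lemma part_equivp_frac_rel: "part_equivp (frac_rel :: 'a::comm_ring_1 \<times> 'a \<Rightarrow> _)"
proof (rule part_equivpI)
  show "\<exists>x::'a \<times> 'a. frac_rel x x" by (rule exI[of _ "(0, 1)"]) simp
  show "symp (frac_rel :: 'a \<times> 'a \<Rightarrow> _)" by (auto simp: symp_def)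
  show "transp (frac_rel :: 'a \<times> 'a \<Rightarrow> _)"
  proof (rule transpI, unfold split_paired_all frac_rel_def fst_conv snd_conv, elim conjE, intro conjI)
    fix a b a' b' a'' b'' :: 'a
    assume ab: "a * b' = a' * b" and ab': "a' * b'' = a'' * b'" and b': "non_zero_divisor b'"
    have "(a * b'') * b' = (a'' * b) * b'"
      by (metis ab ab' mult.assoc mult.commute)
    with b' show "a * b'' = a'' * b" by (rule non_zero_divisor_cancel)
  qed
qed

quotient_type (overloaded) 'a frac = "'a::comm_ring_1 \<times> 'a" / partial: frac_rel
  by (rule part_equivp_frac_rel)

text \<open>Fractions with a zero divisor as denominator are junk; \<open>Frac a b\<close> is then \<open>0\<close>.\<close>

lift_definition Frac :: "'a::comm_ring_1 \<Rightarrow> 'a \<Rightarrow> 'a frac"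
  is "\<lambda>a b. if non_zero_divisor b then (a, b) else (0, 1)"
  by simp

lemma Frac_cases [cases type: frac]:
  obtains (Frac) a b where "q = Frac a b" "non_zero_divisor b"
  by transfer auto

lemma Frac_eq_iff:
  "non_zero_divisor b \<Longrightarrow> non_zero_divisor d \<Longrightarrow> Frac a b = Frac c d \<longleftrightarrow> a * d = c * b"
  by transfer simp

instantiation frac :: (comm_ring_1) comm_ring_1
begin

lift_definition zero_frac :: "'a frac" is "(0, 1)" by simp

lift_definition one_frac :: "'a frac" is "(1, 1)" by simp

lift_definition plus_frac :: "'a frac \<Rightarrow> 'a frac \<Rightarrow> 'a frac"
  is "\<lambda>q r. (fst q * snd r + fst r * snd q, snd q * snd r)"
proof (clarsimp)
  fix a b c d a' b' c' d' :: 'a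
  assume "a * b' = a' * b" "c * d' = c' * d"
  then show "(a * d + c * b) * (b' * d') = (a' * d' + c' * b') * (b * d)"
    by (simp add: algebra_simps) (metis mult.assoc mult.commute)
qed

lift_definition uminus_frac :: "'a frac \<Rightarrow> 'a frac" is "\<lambda>x. (- fst x, snd x)"
  by simp

definition "q - r = q + - (r::'a frac)"

lift_definition times_frac :: "'a frac \<Rightarrow> 'a frac \<Rightarrow> 'a frac"
  is "\<lambda>q r. (fst q * fst r, snd q * snd r)"
proof (clarsimp)
  fix a b c d a' b' c' d' :: 'a
  assume "a * b' = a' * b" "c * d' = c' * d"
  then show "a * c * (b' * d') = a' * c' * (b * d)"
    by (metis mult.assoc mult.commute)
qed

lemma add_Frac:
  "non_zero_divisor b \<Longrightarrow> non_zero_divisor d \<Longrightarrow> Frac a b + Frac c d = Frac (a * d + c * b) (b * d)"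
  by transfer simp

lemma mult_Frac:
  "non_zero_divisor b \<Longrightarrow> non_zero_divisor d \<Longrightarrow> Frac a b * Frac c d = Frac (a * c) (b * d)"
  by transfer simp

instance
proof
  fix q r s :: "'a frac"
  show "q * r * s = q * (r * s)"
    by (cases q, cases r, cases s) (simp add: mult_Frac mult.assoc)
  show "q * r = r * q"
    by (cases q, cases r) (simp add: mult_Frac mult.commute)
  show "1 * q = q"
    by transfer auto
  show "q + r + s = q + (r + s)"
    by (cases q, cases r, cases s) (simp add: add_Frac algebra_simps)
  show "q + r = r + q"
    by (cases q, cases r) (simp add: add_Frac ac_simps)
  show "0 + q = q"
    by transfer auto
  show "- q + q = 0"
    by transfer auto
  show "q - r = q + - r"
    by (simp add: minus_frac_def)
  show "(q + r) * s = q * s + r * s"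
    by (cases q, cases r, cases s) (simp add: add_Frac mult_Frac Frac_eq_iff algebra_simps)
  show "(0::'a frac) \<noteq> 1"
    by transfer simp
qed

end

lemma zero_Frac: "Frac 0 1 = 0"
  by transfer simp

lemma one_Frac: "Frac 1 1 = 1"
  by transfer simp

lemma uminus_Frac: "- Frac a b = Frac (- a) b"
  by transfer simp

lemma of_nat_Frac: "of_nat k = Frac (of_nat k) 1"
  by (induct k) (simp_all add: zero_Frac flip: one_Frac, simp add: add_Frac)

section \<open>Characters of an archimedean preordering\<close>

lemma rat_between:
  fixes a b :: real
  assumes "a < b"
  obtains m :: int and n :: nat where "n > 0" "a < of_int m / of_nat n" "of_int m / of_nat n < b"
proof -
  obtain r where r: "r \<in> \<rat>" "a < r" "r < b" using Rats_dense_in_real[OF assms] by blast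
  then obtain m n where "r = of_int m / real n" "n \<noteq> 0" unfolding Rats_eq_int_div_nat by blast
  with r that show ?thesis by auto
qed

lemma rat_summands_below:
  fixes x y r :: real
  assumes "r < x + y"
  obtains a c :: int and b d :: nat where "b > 0" "d > 0"
    "of_int a / of_nat b < x" "of_int c / of_nat d < y" "r < of_int a / of_nat b + of_int c / of_nat d"
proof -
  have "r - y < x" using assms by linarith
  then obtain a b where ab: "b > 0" "r - y < of_int a / of_nat b" "of_int a / of_nat b < x"
    by (rule rat_between)
  have "r - of_int a / of_nat b < y" using ab(2) by linarith
  then obtain c d
    where cd: "d > 0" "r - of_int a / of_nat b < of_int c / of_nat d" "of_int c / of_nat d < y"
    by (rule rat_between)
  from ab cd that show ?thesis by simp
qed

lemma rat_summands_above:
  fixes x y r :: real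
  assumes "x + y < r"
  obtains a c :: int and b d :: nat where "b > 0" "d > 0"
    "x < of_int a / of_nat b" "y < of_int c / of_nat d" "of_int a / of_nat b + of_int c / of_nat d < r"
proof -
  have "x < r - y" using assms by linarith
  then obtain a b where ab: "b > 0" "x < of_int a / of_nat b" "of_int a / of_nat b < r - y"
    by (rule rat_between)
  have "y < r - of_int a / of_nat b" using ab(3) by linarith
  then obtain c d
    where cd: "d > 0" "y < of_int c / of_nat d" "of_int c / of_nat d < r - of_int a / of_nat b"
    by (rule rat_between)
  from ab cd that show ?thesis by simp
qed

lemma rat_factors_below:
  fixes x y r :: real
  assumes "0 < x" "0 < y" "r < x * y"
  obtains a c :: int and b d :: nat where "b > 0" "d > 0" "a \<ge> 0" "c \<ge> 0"
    "of_int a / of_nat b < x" "of_int c / of_nat d < y"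
    "r < (of_int a / of_nat b) * (of_int c / of_nat d)"
proof -
  have "max 0 (r / y) < x" using assms by (simp add: pos_divide_less_eq)
  then obtain a b where ab: "b > 0" "max 0 (r / y) < of_int a / of_nat b" "of_int a / of_nat b < x"
    by (rule rat_between)
  define p where "p = of_int a / (of_nat b :: real)"
  have p: "0 < p" "r < p * y" using ab assms(2) by (auto simp: p_def pos_divide_less_eq)
  then have "max 0 (r / p) < y" using assms(2) by (simp add: pos_divide_less_eq mult.commute)
  then obtain c d where cd: "d > 0" "max 0 (r / p) < of_int c / of_nat d" "of_int c / of_nat d < y"
    by (rule rat_between)
  have "r < p * (of_int c / of_nat d)" using cd(2) p(1) by (simp add: pos_divide_less_eq mult.commute)
  moreover have "0 < of_int a / (of_nat b :: real)" "0 < of_int c / (of_nat d :: real)"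
    using ab(2) cd(2) by linarith+
  then have "a \<ge> 0" "c \<ge> 0" by (auto simp: zero_less_divide_iff)
  ultimately show ?thesis using that ab cd unfolding p_def by simp
qed

lemma rat_factors_above:
  fixes x y r :: real
  assumes "0 < x" "0 < y" "x * y < r"
  obtains a c :: int and b d :: nat where "b > 0" "d > 0" "a \<ge> 0" "c \<ge> 0"
    "x < of_int a / of_nat b" "y < of_int c / of_nat d"
    "(of_int a / of_nat b) * (of_int c / of_nat d) < r"
proof -
  have "x < r / y" using assms by (simp add: pos_less_divide_eq)
  then obtain a b where ab: "b > 0" "x < of_int a / of_nat b" "of_int a / of_nat b < r / y"
    by (rule rat_between)
  define p where "p = of_int a / (of_nat b :: real)"
  have p: "0 < p" "p * y < r"
    using ab(2,3) assms(1,2) by (simp_all add: p_def pos_less_divide_eq)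
  then have "y < r / p" by (simp add: pos_less_divide_eq mult.commute)
  then obtain c d where cd: "d > 0" "y < of_int c / of_nat d" "of_int c / of_nat d < r / p"
    by (rule rat_between)
  have "p * (of_int c / of_nat d) < r" using cd(3) p(1) by (simp add: pos_less_divide_eq mult.commute)
  moreover have "0 < of_int a / (of_nat b :: real)" "0 < of_int c / (of_nat d :: real)"
    using ab(2) cd(2) assms(1,2) by linarith+
  then have "a \<ge> 0" "c \<ge> 0" by (auto simp: zero_less_divide_iff)
  ultimately show ?thesis using that ab cd unfolding p_def by simp
qed

locale archimedean_preorder =
  fixes A :: "'b::comm_ring_1 set" and T :: "'b set"
  assumes A_0: "0 \<in> A" and A_1: "1 \<in> A"
    and A_add: "x \<in> A \<Longrightarrow> y \<in> A \<Longrightarrow> x + y \<in> A"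
    and A_mult: "x \<in> A \<Longrightarrow> y \<in> A \<Longrightarrow> x * y \<in> A"
    and A_uminus: "x \<in> A \<Longrightarrow> - x \<in> A"
    and T_subset: "T \<subseteq> A"
    and T_add: "x \<in> T \<Longrightarrow> y \<in> T \<Longrightarrow> x + y \<in> T"
    and T_mult: "x \<in> T \<Longrightarrow> y \<in> T \<Longrightarrow> x * y \<in> T"
    and T_square: "x \<in> A \<Longrightarrow> x * x \<in> T"
    and T_bounded: "x \<in> A \<Longrightarrow> \<exists>n::nat. of_nat n - x \<in> T \<and> of_nat n + x \<in> T"
    and T_inverse_nat: "n > 0 \<Longrightarrow> \<exists>v\<in>T. of_nat n * v = 1"
    and T_proper: "- 1 \<notin> T"
    and T_archimedean: "g \<in> A \<Longrightarrow> (\<forall>k::nat. k \<ge> 1 \<longrightarrow> of_nat k * g + 1 \<in> T) \<Longrightarrow> g \<in> T"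
begin

lemma A_diff: "x \<in> A \<Longrightarrow> y \<in> A \<Longrightarrow> x - y \<in> A"
  using A_add A_uminus by (metis diff_conv_add_uminus)

lemma T_0: "0 \<in> T"
  using T_square[OF A_0] by simp

lemma T_1: "1 \<in> T"
  using T_square[OF A_1] by simp

lemma T_of_nat: "of_nat n \<in> T"
  by (induct n) (simp_all add: T_0 T_1 T_add)

lemma A_of_nat: "of_nat n \<in> A"
  using T_of_nat T_subset by auto

lemma A_of_int: "of_int m \<in> A"
  by (cases m rule: int_cases) (auto intro: A_uminus A_of_nat simp del: of_nat_Suc)

lemma divide_nat_closed:
  assumes "T \<subseteq> Q" "\<And>x y. x \<in> Q \<Longrightarrow> y \<in> Q \<Longrightarrow> x * y \<in> Q" "n > 0" "of_nat n * x \<in> Q"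
  shows "x \<in> Q"
proof -
  obtain v where v: "v \<in> T" "of_nat n * v = 1" using T_inverse_nat[OF assms(3)] by blast
  have "v * (of_nat n * x) \<in> Q" using v assms by auto
  also have "v * (of_nat n * x) = x" using v(2) by (metis mult.assoc mult.commute mult_1)
  finally show ?thesis .
qed

definition chars :: "('b \<Rightarrow> real) set" where
  "chars = {\<Psi>. (\<forall>x\<in>A. \<forall>y\<in>A. \<Psi> (x + y) = \<Psi> x + \<Psi> y \<and> \<Psi> (x * y) = \<Psi> x * \<Psi> y) \<and>
          \<Psi> 1 = 1 \<and> (\<forall>t\<in>T. \<Psi> t \<ge> 0)}"

lemma chars_add: "\<Psi> \<in> chars \<Longrightarrow> x \<in> A \<Longrightarrow> y \<in> A \<Longrightarrow> \<Psi> (x + y) = \<Psi> x + \<Psi> y"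
  unfolding chars_def by blast

lemma chars_mult: "\<Psi> \<in> chars \<Longrightarrow> x \<in> A \<Longrightarrow> y \<in> A \<Longrightarrow> \<Psi> (x * y) = \<Psi> x * \<Psi> y"
  unfolding chars_def by blast

lemma chars_1: "\<Psi> \<in> chars \<Longrightarrow> \<Psi> 1 = 1"
  unfolding chars_def by blast

lemma chars_nonneg: "\<Psi> \<in> chars \<Longrightarrow> t \<in> T \<Longrightarrow> \<Psi> t \<ge> 0"
  unfolding chars_def by blast

lemma chars_0: "\<Psi> \<in> chars \<Longrightarrow> \<Psi> 0 = 0"
  using chars_add[of \<Psi> 0 0] A_0 by simp

lemma chars_uminus: "\<Psi> \<in> chars \<Longrightarrow> x \<in> A \<Longrightarrow> \<Psi> (- x) = - \<Psi> x"
  using chars_add[of \<Psi> x "- x"] A_uminus chars_0 by fastforce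

lemma chars_diff: "\<Psi> \<in> chars \<Longrightarrow> x \<in> A \<Longrightarrow> y \<in> A \<Longrightarrow> \<Psi> (x - y) = \<Psi> x - \<Psi> y"
  using chars_add[of \<Psi> x "- y"] chars_uminus[of \<Psi> y] A_uminus by simp

lemma chars_of_nat: "\<Psi> \<in> chars \<Longrightarrow> \<Psi> (of_nat n) = of_nat n"
  by (induct n) (simp_all add: chars_0 chars_1 chars_add A_1 A_of_nat)

lemma chars_of_int: "\<Psi> \<in> chars \<Longrightarrow> \<Psi> (of_int m) = of_int m"
  by (cases m rule: int_cases) (simp_all add: chars_uminus chars_of_nat A_of_nat del: of_nat_Suc)

lemma chars_inverse_nat:
  assumes "\<Psi> \<in> chars" "v \<in> A" "of_nat n * v = 1"
  shows "\<Psi> v = 1 / of_nat n"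
proof -
  have "of_nat n * \<Psi> v = \<Psi> (of_nat n * v)"
    using chars_mult[OF assms(1) A_of_nat assms(2)] chars_of_nat[OF assms(1)] by simp
  also have "\<dots> = 1" using assms(3) chars_1[OF assms(1)] by simp
  finally have "of_nat n * \<Psi> v = 1" .
  then show ?thesis by (cases "n = 0") (simp_all add: field_simps)
qed

end

locale archimedean_ordering = archimedean_preorder A T for A :: "'b::comm_ring_1 set" and T +
  fixes Q :: "'b set"
  assumes T_subset_Q: "T \<subseteq> Q" and Q_subset: "Q \<subseteq> A"
    and Q_add: "x \<in> Q \<Longrightarrow> y \<in> Q \<Longrightarrow> x + y \<in> Q"
    and Q_mult: "x \<in> Q \<Longrightarrow> y \<in> Q \<Longrightarrow> x * y \<in> Q"
    and Q_proper: "- 1 \<notin> Q"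
    and Q_total: "x \<in> A \<Longrightarrow> x \<in> Q \<or> - x \<in> Q"
begin

lemma Q_of_nat: "of_nat n \<in> Q"
  using T_of_nat T_subset_Q by auto

lemma Q_of_int: "m \<ge> 0 \<Longrightarrow> of_int m \<in> Q"
  by (metis Q_of_nat nonneg_int_cases of_int_of_nat_eq)

lemma Q_divide_nat: "n > 0 \<Longrightarrow> of_nat n * x \<in> Q \<Longrightarrow> x \<in> Q"
  using divide_nat_closed[OF T_subset_Q Q_mult] .

lemma Q_of_int_iff: "of_int m \<in> Q \<longleftrightarrow> m \<ge> 0"
proof
  assume m: "of_int m \<in> Q"
  show "m \<ge> 0"
  proof (rule ccontr)
    assume "\<not> m \<ge> 0"
    then have "of_nat (nat (- m)) * (- 1) \<in> Q" "nat (- m) > 0" using m by simp_all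
    then show False using Q_divide_nat Q_proper by blast
  qed
qed (rule Q_of_int)

lemma Q_scale: "x \<in> Q \<Longrightarrow> of_nat m * x \<in> Q"
  using Q_mult Q_of_nat by blast

definition rat_le :: "'b \<Rightarrow> int \<Rightarrow> nat \<Rightarrow> bool" where
  "rat_le x m n \<longleftrightarrow> of_nat n * x - of_int m \<in> Q"

definition le_rat :: "'b \<Rightarrow> int \<Rightarrow> nat \<Rightarrow> bool" where
  "le_rat x m n \<longleftrightarrow> of_int m - of_nat n * x \<in> Q"

definition ordering_char :: "'b \<Rightarrow> real" where
  "ordering_char x = Sup {of_int m / of_nat n | m n. n > 0 \<and> rat_le x m n}"

lemma rat_le_or_le_rat: "x \<in> A \<Longrightarrow> rat_le x m n \<or> le_rat x m n"
  unfolding rat_le_def le_rat_def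
  using Q_total[of "of_nat n * x - of_int m"] A_diff A_mult A_of_nat A_of_int by auto

lemma rat_le_le_rat_imp_le:
  assumes "n > 0" "n' > 0" "rat_le x m n" "le_rat x m' n'"
  shows "of_int m / of_nat n \<le> (of_int m' / of_nat n' :: real)"
proof -
  have "of_nat n' * (of_nat n * x - of_int m) + of_nat n * (of_int m' - of_nat n' * x) \<in> Q"
    using assms Q_add Q_scale unfolding rat_le_def le_rat_def by blast
  also have "of_nat n' * (of_nat n * x - of_int m) + of_nat n * (of_int m' - of_nat n' * x)
      = (of_int (int n * m' - int n' * m) :: 'b)"
    by (simp add: algebra_simps)
  finally have "int n * m' - int n' * m \<ge> 0" by (simp only: Q_of_int_iff)
  then have "int n' * m \<le> int n * m'" by simp
  then have "real n' * of_int m \<le> real n * of_int m'"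
    by (metis of_int_le_iff of_int_mult of_int_of_nat_eq)
  with assms(1,2) show ?thesis by (simp add: divide_simps mult.commute)
qed

lemma rat_le_mono:
  assumes "n > 0" "n' > 0" "rat_le x m n" "of_int m' / of_nat n' \<le> (of_int m / of_nat n :: real)"
  shows "rat_le x m' n'"
proof -
  have "real n * of_int m' \<le> real n' * of_int m"
    using assms by (simp add: divide_simps mult.commute)
  then have le: "int n * m' \<le> int n' * m" by (metis of_int_le_iff of_int_mult of_int_of_nat_eq)
  have "of_nat n' * (of_nat n * x - of_int m) + of_int (int n' * m - int n * m') \<in> Q"
    using assms(3) le unfolding rat_le_def by (intro Q_add Q_scale Q_of_int) auto
  also have "of_nat n' * (of_nat n * x - of_int m) + of_int (int n' * m - int n * m')
      = of_nat n * (of_nat n' * x - (of_int m' :: 'b))"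
    by (simp add: algebra_simps)
  finally show ?thesis unfolding rat_le_def using Q_divide_nat assms(1) by blast
qed

lemma le_rat_mono:
  assumes "n > 0" "n' > 0" "le_rat x m n" "of_int m / of_nat n \<le> (of_int m' / of_nat n' :: real)"
  shows "le_rat x m' n'"
proof -
  have "real n' * of_int m \<le> real n * of_int m'"
    using assms by (simp add: divide_simps mult.commute)
  then have le: "int n' * m \<le> int n * m'" by (metis of_int_le_iff of_int_mult of_int_of_nat_eq)
  have "of_nat n' * (of_int m - of_nat n * x) + of_int (int n * m' - int n' * m) \<in> Q"
    using assms(3) le unfolding le_rat_def by (intro Q_add Q_scale Q_of_int) auto
  also have "of_nat n' * (of_int m - of_nat n * x) + of_int (int n * m' - int n' * m)
      = of_nat n * (of_int m' - of_nat n' * (x :: 'b))"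
    by (simp add: algebra_simps)
  finally show ?thesis unfolding le_rat_def using Q_divide_nat assms(1) by blast
qed

lemma rat_le_add:
  assumes "rat_le x a b" "rat_le y c d"
  shows "rat_le (x + y) (a * int d + c * int b) (b * d)"
proof -
  have "of_nat d * (of_nat b * x - of_int a) + of_nat b * (of_nat d * y - of_int c) \<in> Q"
    using assms unfolding rat_le_def by (intro Q_add Q_scale)
  also have "of_nat d * (of_nat b * x - of_int a) + of_nat b * (of_nat d * y - of_int c)
      = of_nat (b * d) * (x + y) - (of_int (a * int d + c * int b) :: 'b)"
    by (simp add: algebra_simps)
  finally show ?thesis unfolding rat_le_def .
qed

lemma le_rat_add:
  assumes "le_rat x a b" "le_rat y c d"
  shows "le_rat (x + y) (a * int d + c * int b) (b * d)"
proof -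
  have "of_nat d * (of_int a - of_nat b * x) + of_nat b * (of_int c - of_nat d * y) \<in> Q"
    using assms unfolding le_rat_def by (intro Q_add Q_scale)
  also have "of_nat d * (of_int a - of_nat b * x) + of_nat b * (of_int c - of_nat d * y)
      = of_int (a * int d + c * int b) - of_nat (b * d) * (x + y :: 'b)"
    by (simp add: algebra_simps)
  finally show ?thesis unfolding le_rat_def .
qed

lemma rat_le_mult:
  assumes "rat_le x a b" "rat_le y c d" "a \<ge> 0" "c \<ge> 0"
  shows "rat_le (x * y) (a * c) (b * d)"
proof -
  have "(of_nat b * x - of_int a) * (of_nat d * y - of_int c) + of_int c * (of_nat b * x - of_int a)
      + of_int a * (of_nat d * y - of_int c) \<in> Q"
    using assms unfolding rat_le_def by (intro Q_add Q_mult Q_mult[OF Q_of_int]) auto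
  also have "(of_nat b * x - of_int a) * (of_nat d * y - of_int c) + of_int c * (of_nat b * x - of_int a)
      + of_int a * (of_nat d * y - of_int c) = of_nat (b * d) * (x * y) - (of_int (a * c) :: 'b)"
    by (simp add: algebra_simps)
  finally show ?thesis unfolding rat_le_def .
qed

lemma le_rat_mult:
  assumes "x \<in> Q" "le_rat x a b" "le_rat y c d" "c \<ge> 0"
  shows "le_rat (x * y) (a * c) (b * d)"
proof -
  have "of_int c * (of_int a - of_nat b * x) + (of_nat b * x) * (of_int c - of_nat d * y) \<in> Q"
    using assms unfolding le_rat_def by (intro Q_add Q_mult Q_mult[OF Q_of_int] Q_scale) auto
  also have "of_int c * (of_int a - of_nat b * x) + (of_nat b * x) * (of_int c - of_nat d * y)
      = of_int (a * c) - of_nat (b * d) * (x * y :: 'b)"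
    by (simp add: algebra_simps)
  finally show ?thesis unfolding le_rat_def .
qed

lemma bounded_by_int:
  assumes "x \<in> A"
  obtains N :: nat where "rat_le x (- int N) 1" "le_rat x (int N) 1"
proof -
  obtain N :: nat where "of_nat N - x \<in> T" "of_nat N + x \<in> T" using T_bounded[OF assms] by blast
  with that show ?thesis using T_subset_Q unfolding rat_le_def le_rat_def by (auto simp: add.commute)
qed

lemma ordering_char_ge:
  assumes "x \<in> A" "n > 0" "rat_le x m n"
  shows "of_int m / of_nat n \<le> ordering_char x"
  unfolding ordering_char_def
proof (rule cSup_upper)
  obtain N :: nat where N: "le_rat x (int N) 1" using bounded_by_int[OF assms(1)] .
  have "r \<le> real N" if "r \<in> {of_int m / of_nat n | m n. n > 0 \<and> rat_le x m n}" for r :: real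
  proof -
    from that obtain m' n' where "r = of_int m' / of_nat n'" "n' > 0" "rat_le x m' n'" by blast
    then show ?thesis using rat_le_le_rat_imp_le[OF _ _ _ N] by simp
  qed
  then show "bdd_above {of_int m / of_nat n :: real | m n. n > 0 \<and> rat_le x m n}"
    by (rule bdd_aboveI)
qed (use assms in blast)

lemma ordering_char_le:
  assumes "x \<in> A" "n > 0" "le_rat x m n"
  shows "ordering_char x \<le> of_int m / of_nat n"
  unfolding ordering_char_def
proof (rule cSup_least)
  obtain N :: nat where "rat_le x (- int N) 1" using bounded_by_int[OF assms(1)] .
  then show "{of_int m / of_nat n | m n. n > 0 \<and> rat_le x m n} \<noteq> ({} :: real set)" by force
  show "r \<le> of_int m / of_nat n" if "r \<in> {of_int m / of_nat n | m n. n > 0 \<and> rat_le x m n}" for r :: real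
  proof -
    from that obtain m' n' where "r = of_int m' / of_nat n'" "n' > 0" "rat_le x m' n'" by blast
    then show ?thesis using rat_le_le_rat_imp_le[OF _ assms(2) _ assms(3)] by simp
  qed
qed

lemma rat_le_if_less:
  "x \<in> A \<Longrightarrow> n > 0 \<Longrightarrow> of_int m / of_nat n < ordering_char x \<Longrightarrow> rat_le x m n"
  using rat_le_or_le_rat[of x m n] ordering_char_le[of x n m] by linarith

lemma le_rat_if_greater:
  "x \<in> A \<Longrightarrow> n > 0 \<Longrightarrow> ordering_char x < of_int m / of_nat n \<Longrightarrow> le_rat x m n"
  using rat_le_or_le_rat[of x m n] ordering_char_ge[of x n m] by linarith

lemma ordering_char_eqI:
  assumes "x \<in> A"
    and lower: "\<And>m n. n > 0 \<Longrightarrow> of_int m / of_nat n < \<alpha> \<Longrightarrow> rat_le x m n"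
    and upper: "\<And>m n. n > 0 \<Longrightarrow> \<alpha> < of_int m / of_nat n \<Longrightarrow> le_rat x m n"
  shows "ordering_char x = \<alpha>"
proof (rule linorder_cases[of "ordering_char x" \<alpha>])
  assume "ordering_char x < \<alpha>"
  then obtain m n where mn: "n > 0" "ordering_char x < of_int m / of_nat n" "of_int m / of_nat n < \<alpha>"
    by (rule rat_between)
  then have "of_int m / of_nat n \<le> ordering_char x" by (intro ordering_char_ge assms(1) lower)
  with mn show ?thesis by linarith
next
  assume "\<alpha> < ordering_char x"
  then obtain m n where mn: "n > 0" "\<alpha> < of_int m / of_nat n" "of_int m / of_nat n < ordering_char x"
    by (rule rat_between)
  then have "ordering_char x \<le> of_int m / of_nat n" by (intro ordering_char_le assms(1) upper)
  with mn show ?thesis by linarith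
qed

lemma ordering_char_add:
  assumes x: "x \<in> A" and y: "y \<in> A"
  shows "ordering_char (x + y) = ordering_char x + ordering_char y"
proof (rule ordering_char_eqI)
  show "x + y \<in> A" using x y A_add by blast
next
  fix m :: int and n :: nat
  assume n: "n > 0" and lt: "of_int m / of_nat n < ordering_char x + ordering_char y"
  from lt obtain a b c d where abcd: "b > 0" "d > 0" "of_int a / of_nat b < ordering_char x"
    "of_int c / of_nat d < ordering_char y"
    "of_int m / of_nat n < (of_int a / of_nat b + of_int c / of_nat d :: real)"
    by (rule rat_summands_below)
  have "rat_le (x + y) (a * int d + c * int b) (b * d)"
    using abcd x y by (intro rat_le_add rat_le_if_less)
  moreover have "of_int (a * int d + c * int b) / of_nat (b * d)
      = of_int a / of_nat b + (of_int c / of_nat d :: real)"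
    using abcd(1,2) by (simp add: field_simps)
  ultimately show "rat_le (x + y) m n"
    using rat_le_mono[of "b * d" n] abcd n by simp
next
  fix m :: int and n :: nat
  assume n: "n > 0" and gt: "ordering_char x + ordering_char y < of_int m / of_nat n"
  from gt obtain a b c d where abcd: "b > 0" "d > 0" "ordering_char x < of_int a / of_nat b"
    "ordering_char y < of_int c / of_nat d"
    "of_int a / of_nat b + of_int c / of_nat d < (of_int m / of_nat n :: real)"
    by (rule rat_summands_above)
  have "le_rat (x + y) (a * int d + c * int b) (b * d)"
    using abcd x y by (intro le_rat_add le_rat_if_greater)
  moreover have "of_int (a * int d + c * int b) / of_nat (b * d)
      = of_int a / of_nat b + (of_int c / of_nat d :: real)"
    using abcd(1,2) by (simp add: field_simps)
  ultimately show "le_rat (x + y) m n"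
    using le_rat_mono[of "b * d" n] abcd n by simp
qed

lemma ordering_char_1: "ordering_char 1 = 1"
proof (rule ordering_char_eqI)
  fix m :: int and n :: nat
  assume "n > 0" "of_int m / of_nat n < (1::real)"
  then have "int n - m \<ge> 0" by (simp add: divide_less_eq)
  then show "rat_le 1 m n" unfolding rat_le_def using Q_of_int by fastforce
next
  fix m :: int and n :: nat
  assume "n > 0" "(1::real) < of_int m / of_nat n"
  then have "m - int n \<ge> 0" by (simp add: less_divide_eq)
  then show "le_rat 1 m n" unfolding le_rat_def using Q_of_int by fastforce
qed (rule A_1)

lemma ordering_char_nonneg: "x \<in> Q \<Longrightarrow> ordering_char x \<ge> 0"
  using ordering_char_ge[of x 1 0] Q_subset unfolding rat_le_def by auto

lemma ordering_char_nonpos: "x \<in> A \<Longrightarrow> - x \<in> Q \<Longrightarrow> ordering_char x \<le> 0"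
  using ordering_char_le[of x 1 0] unfolding le_rat_def by auto

lemma ordering_char_of_nat_mult:
  assumes "x \<in> A"
  shows "ordering_char (of_nat c * x) = of_nat c * ordering_char x"
proof (induct c)
  case 0
  show ?case using ordering_char_add[OF A_0 A_0] by simp
next
  case (Suc c)
  have "ordering_char (x + of_nat c * x) = ordering_char x + ordering_char (of_nat c * x)"
    using assms A_mult[OF A_of_nat assms] by (rule ordering_char_add)
  with Suc show ?case by (simp add: algebra_simps)
qed

lemma ordering_char_of_nat: "ordering_char (of_nat c) = of_nat c"
  using ordering_char_of_nat_mult[OF A_1, of c] ordering_char_1 by simp

lemma mem_Q_if_ordering_char_pos: "x \<in> A \<Longrightarrow> ordering_char x > 0 \<Longrightarrow> x \<in> Q"
  using rat_le_if_less[of x 1 0] unfolding rat_le_def by simp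

lemma ordering_char_mult_pos:
  assumes x: "x \<in> A" and y: "y \<in> A" and pos: "ordering_char x > 0" "ordering_char y > 0"
  shows "ordering_char (x * y) = ordering_char x * ordering_char y"
proof (rule ordering_char_eqI)
  show "x * y \<in> A" using A_mult x y by blast
next
  fix m :: int and n :: nat
  assume n: "n > 0" and lt: "of_int m / of_nat n < ordering_char x * ordering_char y"
  from pos lt obtain a b c d where abcd: "b > 0" "d > 0" "a \<ge> 0" "c \<ge> 0"
    "of_int a / of_nat b < ordering_char x" "of_int c / of_nat d < ordering_char y"
    "of_int m / of_nat n < (of_int a / of_nat b) * (of_int c / of_nat d :: real)"
    by (rule rat_factors_below)
  have "rat_le (x * y) (a * c) (b * d)"
    using abcd x y by (intro rat_le_mult rat_le_if_less)
  then show "rat_le (x * y) m n"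
    using rat_le_mono[of "b * d" n] abcd n by simp
next
  fix m :: int and n :: nat
  assume n: "n > 0" and gt: "ordering_char x * ordering_char y < of_int m / of_nat n"
  from pos gt obtain a b c d where abcd: "b > 0" "d > 0" "a \<ge> 0" "c \<ge> 0"
    "ordering_char x < of_int a / of_nat b" "ordering_char y < of_int c / of_nat d"
    "(of_int a / of_nat b) * (of_int c / of_nat d) < (of_int m / of_nat n :: real)"
    by (rule rat_factors_above)
  have "le_rat (x * y) (a * c) (b * d)"
    using abcd x y pos by (intro le_rat_mult le_rat_if_greater mem_Q_if_ordering_char_pos)
  then show "le_rat (x * y) m n"
    using le_rat_mono[of "b * d" n] abcd n by simp
qed

text \<open>The general case follows by shifting \<open>x\<close> and \<open>y\<close> by a constant \<open>c\<close> making both positive,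
  using \<open>(x + c) (y + c) = x y + c x + c (y + c)\<close>.\<close>

lemma ordering_char_mult:
  assumes x: "x \<in> A" and y: "y \<in> A"
  shows "ordering_char (x * y) = ordering_char x * ordering_char y"
proof -
  obtain N M :: nat where "rat_le x (- int N) 1" "rat_le y (- int M) 1"
    using bounded_by_int[OF x] bounded_by_int[OF y] by metis
  then have bounds: "- real N \<le> ordering_char x" "- real M \<le> ordering_char y"
    using ordering_char_ge[OF x, of 1] ordering_char_ge[OF y, of 1] by force+
  define c where "c = N + M + 1"
  have cA: "of_nat c \<in> A" by (rule A_of_nat)
  have shift: "ordering_char (z + of_nat c) = ordering_char z + of_nat c" if "z \<in> A" for z
    using ordering_char_add[OF that cA] ordering_char_of_nat by simp
  have "ordering_char ((x + of_nat c) * (y + of_nat c))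
      = ordering_char (x + of_nat c) * ordering_char (y + of_nat c)"
    using x y cA shift bounds unfolding c_def by (intro ordering_char_mult_pos A_add) auto
  moreover have "(x + of_nat c) * (y + of_nat c) = x * y + (of_nat c * x + of_nat c * (y + of_nat c))"
    by (simp add: algebra_simps)
  moreover have "ordering_char (x * y + (of_nat c * x + of_nat c * (y + of_nat c)))
      = ordering_char (x * y) + (of_nat c * ordering_char x + of_nat c * ordering_char (y + of_nat c))"
    using x y cA
    by (simp add: ordering_char_add ordering_char_of_nat_mult A_add A_mult A_of_nat)
  ultimately show ?thesis
    using shift[OF x] shift[OF y] by (simp add: algebra_simps)
qed

lemma ordering_char_in_chars: "ordering_char \<in> chars"
  unfolding chars_def
  using ordering_char_add ordering_char_mult ordering_char_1 ordering_char_nonneg T_subset_Q by auto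

end

context archimedean_preorder
begin

definition preorders :: "'b set set" where
  "preorders = {Q. T \<subseteq> Q \<and> Q \<subseteq> A \<and> (\<forall>x\<in>Q. \<forall>y\<in>Q. x + y \<in> Q) \<and> (\<forall>x\<in>Q. \<forall>y\<in>Q. x * y \<in> Q)
      \<and> - 1 \<notin> Q}"

definition adjoin :: "'b set \<Rightarrow> 'b \<Rightarrow> 'b set" where
  "adjoin Q a = {q1 + a * q2 | q1 q2. q1 \<in> Q \<and> q2 \<in> Q}"

lemma T_in_preorders: "T \<in> preorders"
  unfolding preorders_def using T_subset T_add T_mult T_proper by auto

lemma subset_adjoin:
  assumes "Q \<in> preorders"
  shows "Q \<subseteq> adjoin Q a"
proof
  fix x assume "x \<in> Q"
  moreover have "0 \<in> Q" using assms T_0 unfolding preorders_def by blast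
  moreover have "x = x + a * 0" by simp
  ultimately show "x \<in> adjoin Q a" unfolding adjoin_def by blast
qed

lemma mem_adjoin:
  assumes "Q \<in> preorders"
  shows "a \<in> adjoin Q a"
proof -
  have "0 \<in> Q" "1 \<in> Q" using assms T_0 T_1 unfolding preorders_def by blast+
  moreover have "a = 0 + a * 1" by simp
  ultimately show ?thesis unfolding adjoin_def by blast
qed

lemma adjoin_in_preorders:
  assumes Q: "Q \<in> preorders" and a: "a \<in> A" and proper: "- 1 \<notin> adjoin Q a"
  shows "adjoin Q a \<in> preorders"
proof -
  have TQ: "T \<subseteq> Q" and QA: "Q \<subseteq> A" and add: "\<And>x y. x \<in> Q \<Longrightarrow> y \<in> Q \<Longrightarrow> x + y \<in> Q"
    and mult: "\<And>x y. x \<in> Q \<Longrightarrow> y \<in> Q \<Longrightarrow> x * y \<in> Q"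
    using Q unfolding preorders_def by auto
  have "x + y \<in> adjoin Q a \<and> x * y \<in> adjoin Q a" if xy: "x \<in> adjoin Q a" "y \<in> adjoin Q a" for x y
  proof -
    obtain q1 q2 q3 q4 where q: "x = q1 + a * q2" "y = q3 + a * q4" "q1 \<in> Q" "q2 \<in> Q" "q3 \<in> Q" "q4 \<in> Q"
      using xy unfolding adjoin_def by blast
    have "x + y = (q1 + q3) + a * (q2 + q4)"
      "x * y = (q1 * q3 + (a * a) * (q2 * q4)) + a * (q1 * q4 + q2 * q3)"
      using q by (simp_all add: algebra_simps)
    moreover have "a * a \<in> Q" using T_square[OF a] TQ by auto
    then have "q1 + q3 \<in> Q" "q2 + q4 \<in> Q" "q1 * q3 + (a * a) * (q2 * q4) \<in> Q" "q1 * q4 + q2 * q3 \<in> Q"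
      using q(3-6) by (simp_all add: add mult)
    ultimately show ?thesis unfolding adjoin_def by blast
  qed
  moreover have "adjoin Q a \<subseteq> A" unfolding adjoin_def using QA a A_add A_mult by blast
  moreover have "T \<subseteq> adjoin Q a" using subset_adjoin[OF Q] TQ by blast
  ultimately show ?thesis using proper unfolding preorders_def by blast
qed

lemma maximal_preorder_total:
  assumes Q: "Q \<in> preorders" and max: "\<And>X. X \<in> preorders \<Longrightarrow> Q \<subseteq> X \<Longrightarrow> X = Q" and a: "a \<in> A"
  shows "a \<in> Q \<or> - a \<in> Q"
proof (rule ccontr)
  assume not_in: "\<not> (a \<in> Q \<or> - a \<in> Q)"
  have "- 1 \<in> adjoin Q b" if b: "b \<in> A" "b \<notin> Q" for b
  proof (rule ccontr)
    assume "- 1 \<notin> adjoin Q b"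
    then have "adjoin Q b = Q" by (intro max adjoin_in_preorders Q b(1) subset_adjoin)
    with mem_adjoin[OF Q, of b] b(2) show False by simp
  qed
  from this[of a] this[of "- a"] a not_in A_uminus
  obtain q1 q2 q3 q4 where q: "- 1 = q1 + a * q2" "- 1 = q3 + (- a) * q4"
    "q1 \<in> Q" "q2 \<in> Q" "q3 \<in> Q" "q4 \<in> Q"
    unfolding adjoin_def by blast
  have "- 1 = q1 + q3 + q1 * q3 + (a * a) * (q2 * q4)"
  proof -
    have e: "q1 = - 1 - a * q2" "q3 = - 1 - (- a) * q4"
      using q(1,2) by (metis add_diff_cancel_right')+
    show ?thesis unfolding e by (simp add: algebra_simps)
  qed
  moreover have "a * a \<in> Q" using T_square[OF a] Q unfolding preorders_def by auto
  ultimately show False using q Q unfolding preorders_def by auto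
qed

lemma preorders_chain_Union:
  assumes "\<C> \<noteq> {}" "subset.chain {Q \<in> preorders. g \<in> Q} \<C>"
  shows "\<Union>\<C> \<in> {Q \<in> preorders. g \<in> Q}"
proof -
  have sub: "\<And>Q. Q \<in> \<C> \<Longrightarrow> Q \<in> preorders \<and> g \<in> Q"
    and chain: "\<And>X Y. X \<in> \<C> \<Longrightarrow> Y \<in> \<C> \<Longrightarrow> X \<subseteq> Y \<or> Y \<subseteq> X"
    using assms(2) unfolding subset.chain_def by blast+
  have common: "\<exists>Z\<in>\<C>. x \<in> Z \<and> y \<in> Z" if xy: "x \<in> \<Union>\<C>" "y \<in> \<Union>\<C>" for x y
  proof -
    obtain X Y where "X \<in> \<C>" "Y \<in> \<C>" "x \<in> X" "y \<in> Y" using xy by blast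
    then show ?thesis using chain[of X Y] by blast
  qed
  obtain Q0 where "Q0 \<in> \<C>" using assms(1) by blast
  then have "T \<subseteq> \<Union>\<C>" "g \<in> \<Union>\<C>" using sub unfolding preorders_def by blast+
  moreover have "\<Union>\<C> \<subseteq> A" "- 1 \<notin> \<Union>\<C>" using sub unfolding preorders_def by blast+
  moreover have "x + y \<in> \<Union>\<C> \<and> x * y \<in> \<Union>\<C>" if "x \<in> \<Union>\<C>" "y \<in> \<Union>\<C>" for x y
    using common[OF that] sub unfolding preorders_def by blast
  ultimately show ?thesis unfolding preorders_def by blast
qed

text \<open>If \<open>t \<le> K\<close> and \<open>-M \<le> F\<close>, then multiplying \<open>K a F + a (M K - j) \<ge> 0\<close> by \<open>K - t \<ge> 0\<close> and
  using \<open>F t = 1 + s\<close> lowers the constant term by one unit of \<open>K a\<close>; after \<open>M K\<close> steps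
  some positive multiple of \<open>F\<close> lies in \<open>T\<close>.\<close>

lemma mem_T_if_mult_eq_1_plus:
  assumes F: "F \<in> A" and s: "s \<in> T" and t: "t \<in> T" and Ft: "F * t = 1 + s"
  shows "F \<in> T"
proof -
  obtain K0 :: nat where K0: "of_nat K0 - t \<in> T" using T_bounded[of t] t T_subset by blast
  define K where "K = K0 + 1"
  have K: "of_nat K - t \<in> T" using T_add[OF K0 T_1] by (simp add: K_def algebra_simps)
  have K1: "K > 0" by (simp add: K_def)
  obtain M :: nat where M: "of_nat M + F \<in> T" using T_bounded[OF F] by blast
  have "\<exists>a::nat. a > 0 \<and> of_nat (K * a) * F + of_nat (a * (M * K - j)) \<in> T" if "j \<le> M * K" for j
    using that
  proof (induct j)
    case 0
    have "of_nat K * (of_nat M + F) \<in> T" using T_mult[OF T_of_nat M] .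
    moreover have "of_nat K * (of_nat M + F) = of_nat (K * 1) * F + (of_nat (1 * (M * K - 0)) :: 'b)"
      by (simp add: algebra_simps)
    ultimately show ?case by (intro exI[of _ 1]) simp
  next
    case (Suc j)
    then obtain a :: nat where a: "a > 0" "of_nat (K * a) * F + of_nat (a * (M * K - j)) \<in> T" by auto
    define r where "r = M * K - Suc j"
    have X: "of_nat (K * a) * F + of_nat (a * (r + 1)) \<in> T"
      using a(2) Suc(2) by (simp add: r_def Suc_diff_Suc)
    have "(of_nat (K * a) * F + of_nat (a * (r + 1))) * (of_nat K - t) + of_nat (K * a) * s
          + of_nat (a * (r + 1)) * t \<in> T"
      by (rule T_add[OF T_add[OF T_mult[OF X K] T_mult[OF T_of_nat s]] T_mult[OF T_of_nat t]])
    also have "(of_nat (K * a) * F + of_nat (a * (r + 1))) * (of_nat K - t) + of_nat (K * a) * s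
          + of_nat (a * (r + 1)) * t
        = of_nat (K * (K * a)) * F + of_nat ((K * a) * r) - of_nat (K * a) * (F * t - s - 1)"
      by (simp add: algebra_simps)
    also have "\<dots> = of_nat (K * (K * a)) * F + of_nat ((K * a) * r)" using Ft by simp
    finally show ?case using a(1) K1 by (intro exI[of _ "K * a"]) (simp add: r_def)
  qed
  from this[of "M * K"] obtain a :: nat where "a > 0" "of_nat (K * a) * F \<in> T" by auto
  then show ?thesis using divide_nat_closed[OF order_refl T_mult, of "K * a" F] K1 by simp
qed

text \<open>Kadison--Dubois: a maximal preordering containing \<open>-F\<close> is a total ordering, and its
  character is non-positive at \<open>F\<close>.\<close>

theorem exists_char_nonpos:
  assumes F: "F \<in> A" and not_T: "F \<notin> T"
  shows "\<exists>\<Psi>\<in>chars. \<Psi> F \<le> 0"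
proof -
  have "- 1 \<notin> adjoin T (- F)"
  proof
    assume "- 1 \<in> adjoin T (- F)"
    then obtain s t where "- 1 = s + (- F) * t" "s \<in> T" "t \<in> T" unfolding adjoin_def by blast
    then have "F \<in> T" by (intro mem_T_if_mult_eq_1_plus[OF F]) (auto simp: algebra_simps)
    with not_T show False by simp
  qed
  then have "adjoin T (- F) \<in> {Q \<in> preorders. - F \<in> Q}"
    using adjoin_in_preorders[OF T_in_preorders A_uminus[OF F]] mem_adjoin[OF T_in_preorders] by blast
  then obtain M where M: "M \<in> preorders" "- F \<in> M"
    and max: "\<forall>X\<in>{Q \<in> preorders. - F \<in> Q}. M \<subseteq> X \<longrightarrow> X = M"
    using subset_Zorn_nonempty[of "{Q \<in> preorders. - F \<in> Q}"] preorders_chain_Union by blast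
  interpret M: archimedean_ordering A T M
  proof
    show "T \<subseteq> M" "M \<subseteq> A" "- 1 \<notin> M" "\<And>x y. x \<in> M \<Longrightarrow> y \<in> M \<Longrightarrow> x + y \<in> M"
      "\<And>x y. x \<in> M \<Longrightarrow> y \<in> M \<Longrightarrow> x * y \<in> M"
      using M(1) unfolding preorders_def by auto
    show "x \<in> A \<Longrightarrow> x \<in> M \<or> - x \<in> M" for x
      using maximal_preorder_total[OF M(1)] max M(2) by blast
  qed
  show ?thesis using M.ordering_char_in_chars M.ordering_char_nonpos[OF F M(2)] by blast
qed

corollary exists_char_pos:
  assumes x: "x \<in> A" and not_T: "- x \<notin> T"
  shows "\<exists>\<Psi>\<in>chars. \<Psi> x > 0"
proof -
  obtain k :: nat where k: "k \<ge> 1" "of_nat k * (- x) + 1 \<notin> T"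
    using T_archimedean[of "- x"] A_uminus x not_T by blast
  have kx: "of_nat k * (- x) \<in> A" using A_mult A_of_nat A_uminus x by blast
  obtain \<Psi> where \<Psi>: "\<Psi> \<in> chars" "\<Psi> (of_nat k * (- x) + 1) \<le> 0"
    using exists_char_nonpos[OF A_add[OF kx A_1] k(2)] by blast
  have "\<Psi> (of_nat k * (- x) + 1) = \<Psi> (of_nat k) * \<Psi> (- x) + \<Psi> 1"
    using chars_add[OF \<Psi>(1) kx A_1] chars_mult[OF \<Psi>(1) A_of_nat A_uminus[OF x]] by simp
  also have "\<dots> = 1 - of_nat k * \<Psi> x"
    using chars_of_nat[OF \<Psi>(1)] chars_uminus[OF \<Psi>(1) x] chars_1[OF \<Psi>(1)] by simp
  finally have "\<Psi> (of_nat k * (- x) + 1) = 1 - of_nat k * \<Psi> x" .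
  then have "real k * \<Psi> x \<ge> 1" using \<Psi>(2) by simp
  then have "\<Psi> x > 0" using k(1) by (smt (verit) mult_nonneg_nonpos of_nat_0_le_iff)
  with \<Psi>(1) show ?thesis by blast
qed

lemma exists_rational_shift_small:
  assumes \<Phi>: "\<Phi> \<in> chars" and c: "c \<in> A" and \<epsilon>: "\<epsilon> > 0"
  shows "\<exists>z\<in>A. (\<Phi> z)\<^sup>2 < \<epsilon> \<and> (\<forall>\<Psi>\<in>chars. \<Psi> z - \<Phi> z = \<Psi> c - \<Phi> c)"
proof -
  define \<eta> where "\<eta> = min 1 \<epsilon>"
  have "\<Phi> c - \<eta> < \<Phi> c + \<eta>" using \<epsilon> by (simp add: \<eta>_def)
  then obtain m n where mn: "n > 0" "\<Phi> c - \<eta> < of_int m / of_nat n" "of_int m / of_nat n < \<Phi> c + \<eta>"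
    by (rule rat_between)
  obtain v where v: "v \<in> T" "of_nat n * v = 1" using T_inverse_nat[OF mn(1)] by blast
  have vA: "v \<in> A" using v(1) T_subset by blast
  define z where "z = c - of_int m * v"
  have zA: "z \<in> A" unfolding z_def using c vA A_diff A_mult A_of_int by blast
  have shift: "\<Psi> z = \<Psi> c - of_int m / of_nat n" if "\<Psi> \<in> chars" for \<Psi>
    unfolding z_def
    using chars_diff[OF that c A_mult[OF A_of_int vA]] chars_mult[OF that A_of_int vA]
      chars_of_int[OF that] chars_inverse_nat[OF that vA v(2)]
    by simp
  have small: "\<bar>\<Phi> z\<bar> < \<eta>" using shift[OF \<Phi>] mn(2,3) by linarith
  have "(\<Phi> z)\<^sup>2 = \<bar>\<Phi> z\<bar> * \<bar>\<Phi> z\<bar>" by (simp add: power2_eq_square)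
  also have "\<dots> \<le> 1 * \<bar>\<Phi> z\<bar>" using small by (intro mult_right_mono) (auto simp: \<eta>_def)
  also have "\<dots> < \<epsilon>" using small by (simp add: \<eta>_def)
  finally have "(\<Phi> z)\<^sup>2 < \<epsilon>" .
  moreover have "\<forall>\<Psi>\<in>chars. \<Psi> z - \<Phi> z = \<Psi> c - \<Phi> c" by (simp add: shift \<Phi>)
  ultimately show ?thesis using zA by blast
qed

lemma square_diff_le:
  fixes a b :: real
  shows "(a - b)\<^sup>2 \<le> 2 * a\<^sup>2 + 2 * b\<^sup>2"
proof -
  have "2 * a\<^sup>2 + 2 * b\<^sup>2 - (a - b)\<^sup>2 = (a + b)\<^sup>2" by (simp add: power2_eq_square algebra_simps)
  then show ?thesis using zero_le_power2[of "a + b"] by linarith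
qed

text \<open>The witness is \<open>w = \<Sum>\<^sub>c (c - q\<^sub>c)\<^sup>2\<close> for rationals \<open>q\<^sub>c\<close> close to \<open>\<Phi> c\<close>.\<close>

lemma exists_T_dominating_deviations:
  assumes \<Phi>: "\<Phi> \<in> chars" and "finite C" "C \<subseteq> A" "\<delta> > 0"
  shows "\<exists>w\<in>T. \<Phi> w < \<delta> \<and> (\<forall>\<Psi>\<in>chars. \<forall>c\<in>C. (\<Psi> c - \<Phi> c)\<^sup>2 \<le> 2 * \<Psi> w + 2 * \<delta>)"
  using assms(2-4)
proof (induct C arbitrary: \<delta> rule: finite_induct)
  case empty
  then show ?case using T_0 chars_0[OF \<Phi>] by (intro bexI[of _ 0]) auto
next
  case (insert c C)
  obtain w0 where w0: "w0 \<in> T" "\<Phi> w0 < \<delta> / 2"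
    "\<forall>\<Psi>\<in>chars. \<forall>c\<in>C. (\<Psi> c - \<Phi> c)\<^sup>2 \<le> 2 * \<Psi> w0 + \<delta>"
    using insert(3)[of "\<delta> / 2"] insert(4,5) by auto
  obtain z where z: "z \<in> A" "(\<Phi> z)\<^sup>2 < \<delta> / 2" "\<forall>\<Psi>\<in>chars. \<Psi> z - \<Phi> z = \<Psi> c - \<Phi> c"
    using exists_rational_shift_small[OF \<Phi>, of c "\<delta> / 2"] insert(4,5) by auto
  define w where "w = w0 + z * z"
  have wT: "w \<in> T" unfolding w_def using T_add w0(1) T_square z(1) by blast
  have w: "\<Psi> w = \<Psi> w0 + (\<Psi> z)\<^sup>2" if "\<Psi> \<in> chars" for \<Psi>
    unfolding w_def
    using w0(1) T_subset chars_add[OF that _ A_mult[OF z(1) z(1)]] chars_mult[OF that z(1) z(1)]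
    by (simp add: power2_eq_square subset_iff)
  show ?case
  proof (intro bexI[OF _ wT] conjI ballI)
    show "\<Phi> w < \<delta>" using w[OF \<Phi>] w0(2) z(2) by linarith
    fix \<Psi> c' assume \<Psi>: "\<Psi> \<in> chars" and c': "c' \<in> insert c C"
    have "\<Psi> w0 \<ge> 0" using chars_nonneg[OF \<Psi> w0(1)] .
    show "(\<Psi> c' - \<Phi> c')\<^sup>2 \<le> 2 * \<Psi> w + 2 * \<delta>"
    proof (cases "c' = c")
      case True
      have "(\<Psi> c - \<Phi> c)\<^sup>2 = (\<Psi> z - \<Phi> z)\<^sup>2" using z(3) \<Psi> by simp
      also have "\<dots> \<le> 2 * (\<Psi> z)\<^sup>2 + 2 * (\<Phi> z)\<^sup>2" by (rule square_diff_le)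
      finally show ?thesis unfolding True using w[OF \<Psi>] \<open>\<Psi> w0 \<ge> 0\<close> z(2) insert(5) by linarith
    next
      case False
      then have "(\<Psi> c' - \<Phi> c')\<^sup>2 \<le> 2 * \<Psi> w0 + \<delta>" using w0(3) \<Psi> c' by blast
      then show ?thesis using w[OF \<Psi>] zero_le_power2[of "\<Psi> z"] insert(5) by linarith
    qed
  qed
qed

text \<open>Faithfulness of \<open>u\<close> is what makes \<open>u (1/N - w)\<close> not \<open>\<le> 0\<close> in \<open>T\<close>, where \<open>w\<close> dominates the
  deviations from \<open>\<Phi>\<close> and \<open>\<Phi> w < 1/N\<close>; any character positive at \<open>u (1/N - w)\<close> then works.\<close>

theorem exists_char_near_pos:
  assumes \<Phi>: "\<Phi> \<in> chars" and C: "finite C" "C \<subseteq> A" and \<epsilon>: "\<epsilon> > 0"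
    and u: "u \<in> T" and faithful: "\<And>a. a \<in> A \<Longrightarrow> u * a \<in> T \<Longrightarrow> a \<in> T"
  shows "\<exists>\<Psi>\<in>chars. \<Psi> u > 0 \<and> (\<forall>c\<in>C. \<bar>\<Psi> c - \<Phi> c\<bar> < \<epsilon>)"
proof -
  have uA: "u \<in> A" using u T_subset by blast
  obtain N :: nat where N: "N > 4 / \<epsilon>\<^sup>2" using reals_Archimedean2 by blast
  have N0: "N > 0"
    using N \<epsilon> by (metis of_nat_0_less_iff less_trans zero_less_divide_iff zero_less_numeral zero_less_power)
  define \<delta> where "\<delta> = 1 / real N"
  have \<delta>: "\<delta> > 0" "4 * \<delta> < \<epsilon>\<^sup>2"
    using N N0 \<epsilon> by (auto simp: \<delta>_def divide_simps mult.commute)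
  obtain w where w: "w \<in> T" "\<Phi> w < \<delta>" "\<forall>\<Psi>\<in>chars. \<forall>c\<in>C. (\<Psi> c - \<Phi> c)\<^sup>2 \<le> 2 * \<Psi> w + 2 * \<delta>"
    using exists_T_dominating_deviations[OF \<Phi> C \<delta>(1)] by blast
  obtain v where v: "v \<in> T" "of_nat N * v = 1" using T_inverse_nat[OF N0] by blast
  have vA: "v \<in> A" and wA: "w \<in> A" using v w T_subset by auto
  define b where "b = v - w"
  have bA: "b \<in> A" unfolding b_def using A_diff vA wA by blast
  have b: "\<Psi> b = \<delta> - \<Psi> w" if "\<Psi> \<in> chars" for \<Psi>
    unfolding b_def using chars_diff[OF that vA wA] chars_inverse_nat[OF that vA v(2)]
    by (simp add: \<delta>_def)
  have "- (u * b) \<notin> T"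
  proof
    assume "- (u * b) \<in> T"
    then have "- b \<in> T" using faithful A_uminus bA by simp
    then show False using chars_nonneg[OF \<Phi>] chars_uminus[OF \<Phi> bA] b[OF \<Phi>] w(2) by fastforce
  qed
  then obtain \<Psi> where \<Psi>: "\<Psi> \<in> chars" "\<Psi> (u * b) > 0" using exists_char_pos A_mult uA bA by blast
  have "\<Psi> u * \<Psi> b > 0" using \<Psi> chars_mult[OF \<Psi>(1) uA bA] by simp
  moreover have "\<Psi> u \<ge> 0" using chars_nonneg[OF \<Psi>(1) u] .
  ultimately have pos: "\<Psi> u > 0" "\<Psi> b > 0" by (auto simp: zero_less_mult_iff)
  have "\<bar>\<Psi> c - \<Phi> c\<bar> < \<epsilon>" if c: "c \<in> C" for c
  proof -
    have "\<bar>\<Psi> c - \<Phi> c\<bar>\<^sup>2 \<le> 2 * \<Psi> w + 2 * \<delta>" using w(3) \<Psi>(1) c by simp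
    also have "\<dots> < \<epsilon>\<^sup>2" using pos(2) b[OF \<Psi>(1)] \<delta>(2) by linarith
    finally show ?thesis using \<epsilon> by (simp add: power2_less_imp_less)
  qed
  with pos \<Psi>(1) show ?thesis by blast
qed

end

section \<open>Bounded fractions of a partially ordered ring\<close>

locale po_cone =
  fixes P :: "'a::comm_ring_1 set"
  assumes po_cring: "po_cring P"
begin

lemma P_add: "a \<in> P \<Longrightarrow> b \<in> P \<Longrightarrow> a + b \<in> P"
  using po_cring unfolding po_cring_def by blast

lemma P_mult: "a \<in> P \<Longrightarrow> b \<in> P \<Longrightarrow> a * b \<in> P"
  using po_cring unfolding po_cring_def by blast

lemma P_square: "a * a \<in> P"
  using po_cring unfolding po_cring_def by blast

lemma P_antisym: "a \<in> P \<Longrightarrow> - a \<in> P \<Longrightarrow> a = 0"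
  using po_cring unfolding po_cring_def by blast

lemma P_0: "0 \<in> P"
  using P_square[of 0] by simp

lemma P_1: "1 \<in> P"
  using P_square[of 1] by simp

lemma P_of_nat: "of_nat n \<in> P"
  by (induct n) (simp_all add: P_0 P_1 P_add)

lemma Loc_subset: "t \<in> Loc P \<Longrightarrow> t \<in> P"
  unfolding Loc_def using P_add[of "t - 1" 1] P_1 by auto

lemma Loc_cancel: "t \<in> Loc P \<Longrightarrow> r * t \<in> P \<Longrightarrow> r \<in> P"
  unfolding Loc_def by blast

lemma Loc_1: "1 \<in> Loc P"
  unfolding Loc_def using P_0 by simp

lemma Loc_mult:
  assumes "t1 \<in> Loc P" "t2 \<in> Loc P"
  shows "t1 * t2 \<in> Loc P"
proof -
  have "t1 - 1 \<in> P" "t2 - 1 \<in> P" using assms unfolding Loc_def by blast+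
  then have "(t1 - 1) * t2 + (t2 - 1) \<in> P" using P_add P_mult Loc_subset[OF assms(2)] by blast
  moreover have "(t1 - 1) * t2 + (t2 - 1) = t1 * t2 - 1" by (simp add: algebra_simps)
  moreover have "r \<in> P" if "r * (t1 * t2) \<in> P" for r
  proof -
    have "(r * t1) * t2 \<in> P" using that by (simp add: mult.assoc)
    then show ?thesis using Loc_cancel[OF assms(1)] Loc_cancel[OF assms(2)] by blast
  qed
  ultimately show ?thesis unfolding Loc_def by (simp add: mem_Collect_eq)
qed

lemma Loc_non_zero_divisor:
  assumes "t \<in> Loc P"
  shows "non_zero_divisor t"
  unfolding non_zero_divisor_def
proof (intro allI impI)
  fix x assume "x * t = 0"
  then have "x * t \<in> P" "(- x) * t \<in> P" using P_0 by auto
  then show "x = 0" using Loc_cancel[OF assms] P_antisym by blast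
qed

end

locale archimedean_localizable = po_cone +
  assumes archimedean: "archimedean_cone P" and localizable: "localizable P"
begin

lemma P_archimedean: "(\<And>k::nat. k \<ge> 1 \<Longrightarrow> of_nat k * g + h \<in> P) \<Longrightarrow> g \<in> P"
  using archimedean unfolding archimedean_cone_def by blast

text \<open>If \<open>-e \<le> r \<le> e\<close>, then \<open>k r + (n - 1) e = q (n r) + m (r + e) + (n - 1 - m) e \<ge> 0\<close> for
  \<open>k = q n + m\<close>, \<open>m < n\<close>.\<close>

lemma mem_P_if_mult_of_nat:
  assumes n: "n > 0" and rn: "r * of_nat n \<in> P"
  shows "r \<in> P"
proof -
  obtain e where e: "e \<in> Loc P" "r + e \<in> P" using localizable unfolding localizable_def by blast
  have "of_nat k * r + of_nat (n - 1) * e \<in> P" for k :: nat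
  proof -
    define q m where "q = k div n" and "m = k mod n"
    define d where "d = n - 1 - m"
    have k: "k = q * n + m" by (simp add: q_def m_def)
    have "m < n" using n by (simp add: m_def)
    then have nd: "n - 1 = m + d" by (simp add: d_def)
    have "of_nat k * r + of_nat (n - 1) * e
        = of_nat q * (r * of_nat n) + of_nat m * (r + e) + of_nat d * e"
      unfolding nd k by (simp add: algebra_simps)
    also have "\<dots> \<in> P" by (intro P_add P_mult P_of_nat rn e(2) Loc_subset[OF e(1)])
    finally show ?thesis .
  qed
  then show ?thesis using P_archimedean by blast
qed

lemma of_nat_in_Loc:
  assumes "n > 0"
  shows "(of_nat n :: 'a) \<in> Loc P"
proof -
  have "of_nat n - 1 = (of_nat (n - 1) :: 'a)" using assms by (simp add: of_nat_diff)
  then show ?thesis unfolding Loc_def using P_of_nat mem_P_if_mult_of_nat[OF assms] by simp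
qed


lemma bdloc_iff:
  "x \<in> bdloc P \<longleftrightarrow>
     snd x \<in> Loc P \<and> (\<exists>n::nat. fst x + of_nat n * snd x \<in> P \<and> of_nat n * snd x - fst x \<in> P)"
  unfolding bdloc_def frac_le_def by simp

lemma bdlocI:
  "t \<in> Loc P \<Longrightarrow> r + of_nat n * t \<in> P \<Longrightarrow> of_nat n * t - r \<in> P \<Longrightarrow> (r, t) \<in> bdloc P"
  unfolding bdloc_iff by auto

lemma bdlocE:
  assumes "(r, t) \<in> bdloc P"
  obtains n :: nat where "t \<in> Loc P" "r + of_nat n * t \<in> P" "of_nat n * t - r \<in> P"
  using assms unfolding bdloc_iff by auto

lemma bdloc_Loc: "x \<in> bdloc P \<Longrightarrow> snd x \<in> Loc P"
  unfolding bdloc_iff by blast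

lemma bdloc_add_pair:
  assumes "(r1, t1) \<in> bdloc P" "(r2, t2) \<in> bdloc P"
  shows "frac_add (r1, t1) (r2, t2) \<in> bdloc P"
proof -
  obtain n1 where n1: "t1 \<in> Loc P" "r1 + of_nat n1 * t1 \<in> P" "of_nat n1 * t1 - r1 \<in> P"
    using assms(1) by (rule bdlocE)
  obtain n2 where n2: "t2 \<in> Loc P" "r2 + of_nat n2 * t2 \<in> P" "of_nat n2 * t2 - r2 \<in> P"
    using assms(2) by (rule bdlocE)
  have t: "t1 \<in> P" "t2 \<in> P" using n1 n2 Loc_subset by auto
  have "t2 * (r1 + of_nat n1 * t1) + t1 * (r2 + of_nat n2 * t2) \<in> P"
    "t2 * (of_nat n1 * t1 - r1) + t1 * (of_nat n2 * t2 - r2) \<in> P"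
    using t n1 n2 by (metis P_add P_mult)+
  then show ?thesis unfolding frac_add_def using Loc_mult[OF n1(1) n2(1)]
    by (intro bdlocI[where n = "n1 + n2"]) (simp_all add: algebra_simps)
qed

lemma bdloc_mult_pair:
  assumes "(r1, t1) \<in> bdloc P" "(r2, t2) \<in> bdloc P"
  shows "frac_mult (r1, t1) (r2, t2) \<in> bdloc P"
proof -
  obtain n1 where n1: "t1 \<in> Loc P" "r1 + of_nat n1 * t1 \<in> P" "of_nat n1 * t1 - r1 \<in> P"
    using assms(1) by (rule bdlocE)
  obtain n2 where n2: "t2 \<in> Loc P" "r2 + of_nat n2 * t2 \<in> P" "of_nat n2 * t2 - r2 \<in> P"
    using assms(2) by (rule bdlocE)
  have "(r1 * r2 + of_nat (n1 * n2) * (t1 * t2)) * of_nat 2 =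
     (r1 + of_nat n1 * t1) * (r2 + of_nat n2 * t2) + (of_nat n1 * t1 - r1) * (of_nat n2 * t2 - r2)"
    "(of_nat (n1 * n2) * (t1 * t2) - r1 * r2) * of_nat 2 =
     (of_nat n1 * t1 - r1) * (r2 + of_nat n2 * t2) + (r1 + of_nat n1 * t1) * (of_nat n2 * t2 - r2)"
    by (simp_all add: algebra_simps)
  then have "(r1 * r2 + of_nat (n1 * n2) * (t1 * t2)) * of_nat 2 \<in> P"
    "(of_nat (n1 * n2) * (t1 * t2) - r1 * r2) * of_nat 2 \<in> P"
    using n1 n2 by (metis P_add P_mult)+
  then have "r1 * r2 + of_nat (n1 * n2) * (t1 * t2) \<in> P" "of_nat (n1 * n2) * (t1 * t2) - r1 * r2 \<in> P"
    using mem_P_if_mult_of_nat[of 2] by simp_all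
  then show ?thesis unfolding frac_mult_def using Loc_mult[OF n1(1) n2(1)]
    by (intro bdlocI[where n = "n1 * n2"]) (simp_all add: algebra_simps)
qed

lemma bdloc_add: "x \<in> bdloc P \<Longrightarrow> y \<in> bdloc P \<Longrightarrow> frac_add x y \<in> bdloc P"
  using bdloc_add_pair[of "fst x" "snd x" "fst y" "snd y"] by simp

lemma bdloc_mult: "x \<in> bdloc P \<Longrightarrow> y \<in> bdloc P \<Longrightarrow> frac_mult x y \<in> bdloc P"
  using bdloc_mult_pair[of "fst x" "snd x" "fst y" "snd y"] by simp

lemma bdloc_uminus:
  assumes "x \<in> bdloc P"
  shows "(- fst x, snd x) \<in> bdloc P"
proof -
  obtain n where "snd x \<in> Loc P" "fst x + of_nat n * snd x \<in> P" "of_nat n * snd x - fst x \<in> P"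
    using assms unfolding bdloc_iff by blast
  then show ?thesis by (intro bdlocI[where n = n]) (simp_all add: algebra_simps)
qed

lemma bdloc_0: "(0, 1) \<in> bdloc P"
  using Loc_1 P_0 by (intro bdlocI[where n = 0]) auto

lemma bdloc_1: "(1, 1) \<in> bdloc P"
  using Loc_1 P_0 P_of_nat[of 2] by (intro bdlocI[where n = 1]) auto

lemma bdloc_inverse:
  assumes "t \<in> Loc P"
  shows "(1, t) \<in> bdloc P"
proof (rule bdlocI[where n = 1])
  show "1 + of_nat 1 * t \<in> P" using P_add[OF P_1 Loc_subset[OF assms]] by simp
  show "of_nat 1 * t - 1 \<in> P" using assms unfolding Loc_def by simp
qed (rule assms)

lemma bdloc_self:
  assumes "t \<in> Loc P"
  shows "(t, t) \<in> bdloc P"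
  using assms P_add[OF Loc_subset[OF assms] Loc_subset[OF assms]] P_0
  by (intro bdlocI[where n = 1]) simp_all

lemma bdloc_of_nat: "(of_nat n, 1) \<in> bdloc P"
  using Loc_1 P_0 P_add[OF P_of_nat[of n] P_of_nat[of n]] by (intro bdlocI[where n = n]) simp_all

definition frac_of :: "'a \<times> 'a \<Rightarrow> 'a frac" where
  "frac_of x = Frac (fst x) (snd x)"

definition bounded_fracs :: "'a frac set" where
  "bounded_fracs = frac_of ` bdloc P"

definition nonneg_fracs :: "'a frac set" where
  "nonneg_fracs = frac_of ` {x \<in> bdloc P. fst x \<in> P}"

lemma frac_of_add: "x \<in> bdloc P \<Longrightarrow> y \<in> bdloc P \<Longrightarrow> frac_of x + frac_of y = frac_of (frac_add x y)"
  unfolding frac_of_def frac_add_def using bdloc_Loc Loc_non_zero_divisor by (simp add: add_Frac)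

lemma frac_of_mult: "x \<in> bdloc P \<Longrightarrow> y \<in> bdloc P \<Longrightarrow> frac_of x * frac_of y = frac_of (frac_mult x y)"
  unfolding frac_of_def frac_mult_def using bdloc_Loc Loc_non_zero_divisor by (simp add: mult_Frac)

lemma frac_of_uminus: "- frac_of x = frac_of (- fst x, snd x)"
  unfolding frac_of_def by (simp add: uminus_Frac)

lemma frac_of_eq_iff: "x \<in> bdloc P \<Longrightarrow> y \<in> bdloc P \<Longrightarrow> frac_of x = frac_of y \<longleftrightarrow> frac_eq x y"
  unfolding frac_of_def frac_eq_def using bdloc_Loc Loc_non_zero_divisor by (simp add: Frac_eq_iff)

lemma frac_of_0: "frac_of (0, 1) = 0"
  unfolding frac_of_def by (simp add: zero_Frac)

lemma frac_of_1: "frac_of (1, 1) = 1"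
  unfolding frac_of_def by (simp add: one_Frac)

lemma frac_of_of_nat: "frac_of (of_nat n, 1) = of_nat n"
  unfolding frac_of_def by (simp add: of_nat_Frac)

lemma frac_of_in_bounded_fracs: "x \<in> bdloc P \<Longrightarrow> frac_of x \<in> bounded_fracs"
  unfolding bounded_fracs_def by blast

lemma frac_of_in_nonneg_fracs_iff:
  assumes "x \<in> bdloc P"
  shows "frac_of x \<in> nonneg_fracs \<longleftrightarrow> fst x \<in> P"
proof
  assume "frac_of x \<in> nonneg_fracs"
  then obtain y where y: "y \<in> bdloc P" "fst y \<in> P" "frac_of x = frac_of y"
    unfolding nonneg_fracs_def by blast
  then have "fst x * snd y = fst y * snd x" using frac_of_eq_iff[OF assms] by (simp add: frac_eq_def)
  moreover have "fst y * snd x \<in> P" using y(2) bdloc_Loc[OF assms] Loc_subset P_mult by blast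
  ultimately show "fst x \<in> P" using Loc_cancel bdloc_Loc[OF y(1)] by metis
qed (use assms in \<open>auto simp: nonneg_fracs_def\<close>)

lemma bounded_fracsE:
  assumes "c \<in> bounded_fracs"
  obtains x where "x \<in> bdloc P" "c = frac_of x"
  using assms unfolding bounded_fracs_def by blast

lemma nonneg_fracsE:
  assumes "c \<in> nonneg_fracs"
  obtains x where "x \<in> bdloc P" "fst x \<in> P" "c = frac_of x"
  using assms unfolding nonneg_fracs_def by blast

lemma nonneg_fracs_add_mult:
  assumes "c \<in> nonneg_fracs" "d \<in> nonneg_fracs"
  shows "c + d \<in> nonneg_fracs \<and> c * d \<in> nonneg_fracs"
proof -
  obtain x where x: "x \<in> bdloc P" "fst x \<in> P" "c = frac_of x" using assms(1) by (rule nonneg_fracsE)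
  obtain y where y: "y \<in> bdloc P" "fst y \<in> P" "d = frac_of y" using assms(2) by (rule nonneg_fracsE)
  have "snd x \<in> P" "snd y \<in> P" using x(1) y(1) bdloc_Loc Loc_subset by blast+
  then have "fst (frac_add x y) \<in> P" "fst (frac_mult x y) \<in> P"
    unfolding frac_add_def frac_mult_def using x(2) y(2) by (auto intro!: P_add P_mult)
  then show ?thesis
    using x y frac_of_add frac_of_mult bdloc_add bdloc_mult frac_of_in_nonneg_fracs_iff by simp
qed

lemma nonneg_fracs_bounded:
  assumes "c \<in> bounded_fracs"
  shows "\<exists>n::nat. of_nat n - c \<in> nonneg_fracs \<and> of_nat n + c \<in> nonneg_fracs"
proof -
  obtain x where x: "x \<in> bdloc P" "c = frac_of x" using assms by (rule bounded_fracsE)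
  obtain n :: nat where n: "fst x + of_nat n * snd x \<in> P" "of_nat n * snd x - fst x \<in> P"
    using x(1) unfolding bdloc_iff by blast
  let ?y = "frac_add (of_nat n, 1) (- fst x, snd x)" and ?z = "frac_add (of_nat n, 1) x"
  have yz: "?y \<in> bdloc P" "?z \<in> bdloc P" using bdloc_add bdloc_of_nat bdloc_uminus x(1) by blast+
  have "of_nat n - c = frac_of ?y"
    using x frac_of_add[OF bdloc_of_nat bdloc_uminus] frac_of_of_nat frac_of_uminus
    by (simp add: diff_conv_add_uminus del: add_uminus_conv_diff)
  moreover have "of_nat n + c = frac_of ?z"
    using x frac_of_add[OF bdloc_of_nat] frac_of_of_nat by simp
  moreover have "fst ?y \<in> P" "fst ?z \<in> P" using n by (simp_all add: frac_add_def add.commute)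
  ultimately show ?thesis
    using frac_of_in_nonneg_fracs_iff[OF yz(1)] frac_of_in_nonneg_fracs_iff[OF yz(2)] by (auto intro!: exI[of _ n])
qed

lemma nonneg_fracs_archimedean:
  assumes c: "c \<in> bounded_fracs" and k: "\<forall>k::nat. k \<ge> 1 \<longrightarrow> of_nat k * c + 1 \<in> nonneg_fracs"
  shows "c \<in> nonneg_fracs"
proof -
  obtain x where x: "x \<in> bdloc P" "c = frac_of x" using c by (rule bounded_fracsE)
  have "of_nat k * fst x + snd x \<in> P" if "k \<ge> 1" for k :: nat
  proof -
    let ?y = "frac_add (frac_mult (of_nat k, 1) x) (1, 1)"
    have y: "?y \<in> bdloc P" using bdloc_add bdloc_mult bdloc_of_nat bdloc_1 x(1) by blast
    have "of_nat k * c + 1 = frac_of ?y"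
      using x frac_of_mult[OF bdloc_of_nat x(1)] frac_of_add[OF bdloc_mult[OF bdloc_of_nat x(1)] bdloc_1]
        frac_of_of_nat frac_of_1 by simp
    then have "fst ?y \<in> P" using k[rule_format, OF that] frac_of_in_nonneg_fracs_iff[OF y] by simp
    then show ?thesis by (simp add: frac_add_def frac_mult_def)
  qed
  then have "fst x \<in> P" by (rule P_archimedean)
  then show ?thesis using x frac_of_in_nonneg_fracs_iff by simp
qed

lemma nonneg_fracs_inverse_nat:
  assumes "n > 0"
  shows "\<exists>v\<in>nonneg_fracs. of_nat n * v = 1"
proof
  have L: "(of_nat n :: 'a) \<in> Loc P" using of_nat_in_Loc[OF assms] .
  show "frac_of (1, of_nat n) \<in> nonneg_fracs"
    using frac_of_in_nonneg_fracs_iff bdloc_inverse[OF L] P_1 by simp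
  show "of_nat n * frac_of (1, of_nat n) = 1"
    using Loc_non_zero_divisor[OF L] unfolding frac_of_def
    by (simp add: of_nat_Frac mult_Frac Frac_eq_iff flip: one_Frac)
qed

sublocale fracs: archimedean_preorder bounded_fracs nonneg_fracs
proof
  show "0 \<in> bounded_fracs" "1 \<in> bounded_fracs"
    using frac_of_in_bounded_fracs[OF bdloc_0] frac_of_in_bounded_fracs[OF bdloc_1] frac_of_0 frac_of_1
    by simp_all
  show "x + y \<in> bounded_fracs" if "x \<in> bounded_fracs" "y \<in> bounded_fracs" for x y
    using that by (elim bounded_fracsE) (simp add: frac_of_add frac_of_in_bounded_fracs bdloc_add)
  show "x * y \<in> bounded_fracs" if "x \<in> bounded_fracs" "y \<in> bounded_fracs" for x y
    using that by (elim bounded_fracsE) (simp add: frac_of_mult frac_of_in_bounded_fracs bdloc_mult)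
  show "- x \<in> bounded_fracs" if "x \<in> bounded_fracs" for x
    using that by (elim bounded_fracsE) (simp add: frac_of_uminus frac_of_in_bounded_fracs bdloc_uminus)
  show "nonneg_fracs \<subseteq> bounded_fracs"
    unfolding nonneg_fracs_def bounded_fracs_def by blast
  show "x * x \<in> nonneg_fracs" if x: "x \<in> bounded_fracs" for x
  proof -
    obtain y where y: "y \<in> bdloc P" "x = frac_of y" using x by (rule bounded_fracsE)
    have "fst (frac_mult y y) \<in> P" by (simp add: frac_mult_def P_square)
    then show ?thesis using y frac_of_mult frac_of_in_nonneg_fracs_iff[OF bdloc_mult[OF y(1) y(1)]] by simp
  qed
  have "- (1::'a) \<notin> P" using P_antisym[of 1] P_1 by auto
  then show "- 1 \<notin> nonneg_fracs"
    using frac_of_in_nonneg_fracs_iff[OF bdloc_uminus[OF bdloc_1]] frac_of_uminus[of "(1, 1)"] frac_of_1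
    by simp
qed (use nonneg_fracs_add_mult nonneg_fracs_bounded nonneg_fracs_inverse_nat nonneg_fracs_archimedean in auto)

definition pair_char :: "('a frac \<Rightarrow> real) \<Rightarrow> ('a \<times> 'a \<Rightarrow> real)" where
  "pair_char \<Psi> = (\<lambda>x. if x \<in> bdloc P then \<Psi> (frac_of x) else 0)"

lemma pair_char_in_Kchar:
  assumes \<Psi>: "\<Psi> \<in> fracs.chars"
  shows "pair_char \<Psi> \<in> Kchar P"
  unfolding Kchar_def mem_Collect_eq
proof (intro conjI ballI impI allI)
  fix x y assume xy: "x \<in> bdloc P" "y \<in> bdloc P"
  then have bd: "frac_of x \<in> bounded_fracs" "frac_of y \<in> bounded_fracs"
    by (simp_all add: frac_of_in_bounded_fracs)
  show "pair_char \<Psi> (frac_add x y) = pair_char \<Psi> x + pair_char \<Psi> y"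
    using xy bdloc_add fracs.chars_add[OF \<Psi> bd] by (simp add: pair_char_def frac_of_add)
  show "pair_char \<Psi> (frac_mult x y) = pair_char \<Psi> x * pair_char \<Psi> y"
    using xy bdloc_mult fracs.chars_mult[OF \<Psi> bd] by (simp add: pair_char_def frac_of_mult)
  show "frac_eq x y \<Longrightarrow> pair_char \<Psi> x = pair_char \<Psi> y"
    using xy frac_of_eq_iff[OF xy] by (simp add: pair_char_def)
next
  show "pair_char \<Psi> (1, 1) = 1"
    using bdloc_1 frac_of_1 fracs.chars_1[OF \<Psi>] by (simp add: pair_char_def)
next
  fix x assume "x \<in> bdloc P" "frac_le P (0, 1) x"
  then show "pair_char \<Psi> x \<ge> 0"
    using frac_of_in_nonneg_fracs_iff fracs.chars_nonneg[OF \<Psi>] by (simp add: pair_char_def frac_le_def)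
qed (simp add: pair_char_def)

lemma KcharD:
  assumes "\<phi> \<in> Kchar P"
  shows "\<And>x y. x \<in> bdloc P \<Longrightarrow> y \<in> bdloc P \<Longrightarrow> frac_eq x y \<Longrightarrow> \<phi> x = \<phi> y"
    and "\<phi> (1, 1) = 1"
    and "\<And>x y. x \<in> bdloc P \<Longrightarrow> y \<in> bdloc P \<Longrightarrow> \<phi> (frac_add x y) = \<phi> x + \<phi> y"
    and "\<And>x y. x \<in> bdloc P \<Longrightarrow> y \<in> bdloc P \<Longrightarrow> \<phi> (frac_mult x y) = \<phi> x * \<phi> y"
    and "\<And>x. x \<in> bdloc P \<Longrightarrow> frac_le P (0, 1) x \<Longrightarrow> \<phi> x \<ge> 0"
    and "\<And>x. x \<notin> bdloc P \<Longrightarrow> \<phi> x = 0"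
  using assms unfolding Kchar_def by blast+

lemma Kchar_factor:
  assumes phi: "\<phi> \<in> Kchar P"
  shows "\<exists>\<Phi>\<in>fracs.chars. \<forall>x\<in>bdloc P. \<phi> x = \<Phi> (frac_of x)"
proof -
  define \<Phi> where "\<Phi> c = \<phi> (SOME x. x \<in> bdloc P \<and> frac_of x = c)" for c
  note props = KcharD[OF phi]
  have Phi_frac_of: "\<Phi> (frac_of x) = \<phi> x" if x: "x \<in> bdloc P" for x
  proof -
    have ex: "\<exists>y. y \<in> bdloc P \<and> frac_of y = frac_of x" using x by blast
    define y where "y = (SOME y. y \<in> bdloc P \<and> frac_of y = frac_of x)"
    have y: "y \<in> bdloc P" "frac_of y = frac_of x" using someI_ex[OF ex] unfolding y_def by blast+
    have "frac_eq y x" using frac_of_eq_iff[OF y(1) x] y(2) by simp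
    then have "\<phi> y = \<phi> x" using props(1)[OF y(1) x] by blast
    then show ?thesis unfolding \<Phi>_def y_def by simp
  qed
  have "\<Phi> \<in> fracs.chars" unfolding fracs.chars_def mem_Collect_eq
  proof (intro conjI ballI)
    fix c d assume c: "c \<in> bounded_fracs" and d: "d \<in> bounded_fracs"
    obtain x where x: "x \<in> bdloc P" "c = frac_of x" using c by (rule bounded_fracsE)
    obtain y where y: "y \<in> bdloc P" "d = frac_of y" using d by (rule bounded_fracsE)
    show "\<Phi> (c + d) = \<Phi> c + \<Phi> d"
      using x y frac_of_add[OF x(1) y(1)] Phi_frac_of bdloc_add props(3) by simp
    show "\<Phi> (c * d) = \<Phi> c * \<Phi> d"
      using x y frac_of_mult[OF x(1) y(1)] Phi_frac_of bdloc_mult props(4) by simp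
  next
    show "\<Phi> 1 = 1" using Phi_frac_of[OF bdloc_1] frac_of_1 props(2) by simp
  next
    fix t assume "t \<in> nonneg_fracs"
    then obtain x where x: "x \<in> bdloc P" "fst x \<in> P" "t = frac_of x" unfolding nonneg_fracs_def by blast
    have "frac_le P (0, 1) x" unfolding frac_le_def using x(2) by simp
    then show "\<Phi> t \<ge> 0" using props(5) x Phi_frac_of by simp
  qed
  then show ?thesis using Phi_frac_of by (intro bexI[of _ \<Phi>]) auto
qed

lemma exists_Kchar_near_Oinf:
  assumes t: "t \<in> Loc P" and \<phi>: "\<phi> \<in> Kchar P" and F: "finite F" and \<epsilon>: "\<epsilon> > 0"
  shows "\<exists>\<psi>\<in>Kchar P. \<psi> (1, t) > 0 \<and> (\<forall>x\<in>F. \<bar>\<psi> x - \<phi> x\<bar> < \<epsilon>)"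
proof -
  obtain \<Phi> where \<Phi>: "\<Phi> \<in> fracs.chars" "\<forall>x\<in>bdloc P. \<phi> x = \<Phi> (frac_of x)"
    using Kchar_factor[OF \<phi>] by blast
  define C where "C = frac_of ` (F \<inter> bdloc P)"
  have C: "finite C" "C \<subseteq> bounded_fracs" unfolding C_def bounded_fracs_def using F by auto
  define u where "u = frac_of (1, t)"
  have u: "u \<in> nonneg_fracs" unfolding u_def using frac_of_in_nonneg_fracs_iff bdloc_inverse[OF t] P_1 by simp
  have faithful: "c \<in> nonneg_fracs" if c: "c \<in> bounded_fracs" "u * c \<in> nonneg_fracs" for c
  proof -
    obtain x where x: "x \<in> bdloc P" "c = frac_of x" using c(1) by (rule bounded_fracsE)
    have tx: "frac_mult (1, t) x \<in> bdloc P" by (rule bdloc_mult[OF bdloc_inverse[OF t] x(1)])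
    have "u * c = frac_of (frac_mult (1, t) x)"
      unfolding u_def x(2) using frac_of_mult[OF bdloc_inverse[OF t] x(1)] .
    then have "fst (frac_mult (1, t) x) \<in> P" using frac_of_in_nonneg_fracs_iff[OF tx] c(2) by simp
    then show ?thesis using x frac_of_in_nonneg_fracs_iff by (simp add: frac_mult_def)
  qed
  obtain \<Psi> where \<Psi>: "\<Psi> \<in> fracs.chars" "\<Psi> u > 0" "\<forall>c\<in>C. \<bar>\<Psi> c - \<Phi> c\<bar> < \<epsilon>"
    using fracs.exists_char_near_pos[OF \<Phi>(1) C \<epsilon> u faithful] by blast
  have "\<bar>pair_char \<Psi> x - \<phi> x\<bar> < \<epsilon>" if "x \<in> F" for x
    using that \<Psi>(3) \<Phi>(2) KcharD(6)[OF \<phi>] \<epsilon> unfolding C_def pair_char_def by auto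
  moreover have "pair_char \<Psi> (1, t) > 0"
    using bdloc_inverse[OF t] \<Psi>(2) unfolding u_def pair_char_def by simp
  ultimately show ?thesis using pair_char_in_Kchar[OF \<Psi>(1)] by blast
qed

end

section \<open>The maximal domain of \<open>\<widehat>s\<close>\<close>

lemma ae_max_dom_eqI:
  assumes "ae_rep X (U, f)" "ae_eq X (U, f) a"
    and max: "\<And>V g. ae_rep X (V, g) \<Longrightarrow> ae_eq X (V, g) a \<Longrightarrow> V \<subseteq> U \<and> (\<forall>x\<in>V. f x = g x)"
  shows "ae_max_dom X a = U"
  unfolding ae_max_dom_def
proof (rule the_equality)
  show "\<exists>f. ae_rep X (U, f) \<and> ae_eq X (U, f) a \<and>
      (\<forall>V g. ae_rep X (V, g) \<and> ae_eq X (V, g) a \<longrightarrow> V \<subseteq> U \<and> (\<forall>x\<in>V. f x = g x))"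
    using assms by blast
next
  fix U' assume "\<exists>f'. ae_rep X (U', f') \<and> ae_eq X (U', f') a \<and>
      (\<forall>V g. ae_rep X (V, g) \<and> ae_eq X (V, g) a \<longrightarrow> V \<subseteq> U' \<and> (\<forall>x\<in>V. f' x = g x))"
  then obtain f' where "ae_rep X (U', f')" "ae_eq X (U', f') a"
    "\<And>V g. ae_rep X (V, g) \<Longrightarrow> ae_eq X (V, g) a \<Longrightarrow> V \<subseteq> U'"
    by blast
  with assms(1,2) max show "U' = U" by blast
qed

lemma ae_eq_restrict:
  assumes "openin X U'" "U' \<subseteq> U" "\<And>x. x \<in> U' \<Longrightarrow> f x = g x"
  shows "ae_eq X (U, f) (U', g)"
  unfolding ae_eq_def fst_conv snd_conv
proof (intro exI[of _ U'] conjI ballI)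
  have "U \<inter> U' = U'" using assms(2) by blast
  moreover have "topspace (subtopology X U') = U'" using openin_subset[OF assms(1)] by auto
  ultimately show "subtopology X (U \<inter> U') closure_of U' = U \<inter> U'"
    by (metis closure_of_topspace)
qed (use assms in auto)

lemma subtopology_closure_of_dense_Int:
  assumes V: "openin X V" and U: "X closure_of U = topspace X"
    and W: "W \<subseteq> V \<inter> U" "subtopology X (V \<inter> U) closure_of W = V \<inter> U"
  shows "subtopology X V closure_of W = V"
proof -
  have "V \<inter> U \<subseteq> X closure_of W" using W closure_of_subtopology_open[of X "V \<inter> U" W] by auto
  then have "X closure_of (V \<inter> U) \<subseteq> X closure_of W" by (metis closure_of_closure_of closure_of_mono)
  moreover have "X closure_of (V \<inter> U) = X closure_of V"
    using closure_of_openin_Int_superset[of X V U] V U openin_subset by auto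
  moreover have "V \<subseteq> X closure_of V" using closure_of_subset openin_subset[OF V] by blast
  ultimately show ?thesis using closure_of_subtopology_open[of X V W] V by auto
qed

lemma nonzero_if_inverse_continuous:
  assumes g: "continuous_map (subtopology X V) euclideanreal g"
    and W: "subtopology X V closure_of W = V"
    and h: "continuous_map X euclideanreal h" and hW: "\<And>y. y \<in> W \<Longrightarrow> h y > 0 \<and> g y = inverse (h y)"
    and x: "x \<in> V"
  shows "h x \<noteq> 0"
proof
  assume hx: "h x = 0"
  define c where "c = \<bar>g x\<bar> + 2"
  define G where "G = {y \<in> topspace (subtopology X V). g y \<in> ball (g x) 1}
    \<inter> {y \<in> topspace (subtopology X V). h y \<in> {..<1 / c}}"
  have G: "openin (subtopology X V) G"
    unfolding G_def using g continuous_map_from_subtopology[OF h]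
    by (intro openin_Int openin_continuous_map_preimage) auto
  have xG: "x \<in> G" using x W hx closure_of_subset_topspace[of "subtopology X V" W]
    unfolding G_def c_def by auto
  have "x \<in> subtopology X V closure_of W" using W x by simp
  then obtain y where y: "y \<in> W" "y \<in> G" using G xG unfolding in_closure_of by blast
  have "c * h y < 1" "h y > 0" using y hW unfolding G_def c_def by (auto simp: field_simps)
  then have "c < g y" using hW[OF y(1)] by (simp add: field_simps)
  moreover have "\<bar>g y - g x\<bar> < 1" using y(2) unfolding G_def by (simp add: dist_real_def abs_minus_commute)
  ultimately show False unfolding c_def by linarith
qed

lemma finite_common_radius:
  fixes \<phi> :: "'i \<Rightarrow> real"
  assumes "finite F" and "\<And>i. i \<in> F \<Longrightarrow> open (U i) \<and> \<phi> i \<in> U i"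
  obtains \<epsilon> where "\<epsilon> > 0" "\<And>i y. i \<in> F \<Longrightarrow> \<bar>y - \<phi> i\<bar> < \<epsilon> \<Longrightarrow> y \<in> U i"
proof -
  have "\<exists>e>0. \<forall>y. \<bar>y - \<phi> i\<bar> < e \<longrightarrow> y \<in> U i" if "i \<in> F" for i
    using assms(2)[OF that] unfolding open_dist dist_real_def by blast
  then obtain E where E: "\<And>i. i \<in> F \<Longrightarrow> E i > 0 \<and> (\<forall>y. \<bar>y - \<phi> i\<bar> < E i \<longrightarrow> y \<in> U i)" by metis
  define \<epsilon> where "\<epsilon> = Min (insert 1 (E ` F))"
  have fin: "finite (insert 1 (E ` F))" using assms(1) by simp
  have "\<epsilon> > 0" unfolding \<epsilon>_def using fin E by (subst Min_gr_iff) auto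
  moreover have "\<epsilon> \<le> E i" if "i \<in> F" for i unfolding \<epsilon>_def using fin that by (intro Min_le) auto
  ultimately show ?thesis using that E by force
qed

lemma topspace_Ktop: "topspace (Ktop P) = Kchar P"
  unfolding Ktop_def by simp

lemma continuous_map_Ktop_eval: "continuous_map (Ktop P) euclideanreal (\<lambda>\<phi>. \<phi> x)"
  unfolding Ktop_def
  by (rule continuous_map_from_subtopology[OF continuous_map_product_projection]) simp

lemma openin_Oinf: "openin (Ktop P) (Oinf P t)"
proof -
  have eq: "Oinf P t = {\<phi> \<in> topspace (Ktop P). \<phi> (1, t) \<in> {0<..}}"
    unfolding Oinf_def topspace_Ktop by auto
  show ?thesis unfolding eq by (rule openin_continuous_map_preimage[OF continuous_map_Ktop_eval]) simp
qed

lemma openin_KtopE: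
  assumes G: "openin (Ktop P) G" and \<phi>: "\<phi> \<in> G"
  obtains F \<epsilon> where "finite F" "\<epsilon> > 0" "\<And>\<psi>. \<psi> \<in> Kchar P \<Longrightarrow> (\<forall>x\<in>F. \<bar>\<psi> x - \<phi> x\<bar> < \<epsilon>) \<Longrightarrow> \<psi> \<in> G"
proof -
  obtain S where S: "openin (powertop_real UNIV) S" "G = S \<inter> Kchar P"
    using G unfolding Ktop_def openin_subtopology by blast
  then obtain U where U: "finite {i. U i \<noteq> UNIV}" "\<And>i. open (U i)" "\<phi> \<in> Pi\<^sub>E UNIV U" "Pi\<^sub>E UNIV U \<subseteq> S"
    using \<phi> unfolding openin_product_topology_alt by auto
  define F where "F = {i. U i \<noteq> UNIV}"
  obtain \<epsilon> where \<epsilon>: "\<epsilon> > 0" "\<And>i y. i \<in> F \<Longrightarrow> \<bar>y - \<phi> i\<bar> < \<epsilon> \<Longrightarrow> y \<in> U i"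
    using finite_common_radius[of F U \<phi>] U(1-3) unfolding F_def by blast
  have "\<psi> \<in> G" if "\<psi> \<in> Kchar P" "\<forall>x\<in>F. \<bar>\<psi> x - \<phi> x\<bar> < \<epsilon>" for \<psi>
  proof -
    have "\<psi> i \<in> U i" for i
    proof (cases "i \<in> F")
      case True
      then show ?thesis using that(2) \<epsilon>(2) by blast
    qed (simp add: F_def)
    then show ?thesis using U(4) S(2) that(1) by (auto simp: PiE_iff)
  qed
  with that U(1) \<epsilon>(1) show ?thesis unfolding F_def by blast
qed

context archimedean_localizable
begin

lemma dense_Oinf:
  assumes t: "t \<in> Loc P"
  shows "Ktop P closure_of Oinf P t = topspace (Ktop P)"
  unfolding dense_intersects_open
proof (intro allI impI)
  fix G assume G: "openin (Ktop P) G \<and> G \<noteq> {}"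
  then obtain \<phi> where \<phi>: "\<phi> \<in> G" by blast
  have \<phi>K: "\<phi> \<in> Kchar P" using \<phi> G openin_subset topspace_Ktop by blast
  obtain F \<epsilon> where F: "finite F" "\<epsilon> > 0" "\<And>\<psi>. \<psi> \<in> Kchar P \<Longrightarrow> (\<forall>x\<in>F. \<bar>\<psi> x - \<phi> x\<bar> < \<epsilon>) \<Longrightarrow> \<psi> \<in> G"
    using openin_KtopE[OF conjunct1[OF G] \<phi>] by blast
  obtain \<psi> where \<psi>: "\<psi> \<in> Kchar P" "\<psi> (1, t) > 0" "\<forall>x\<in>F. \<bar>\<psi> x - \<phi> x\<bar> < \<epsilon>"
    using exists_Kchar_near_Oinf[OF t \<phi>K F(1,2)] by blast
  then have "\<psi> \<in> Oinf P t \<inter> G" using F(3) unfolding Oinf_def by blast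
  then show "Oinf P t \<inter> G \<noteq> {}" by blast
qed

lemma Kchar_inverse_nonneg: "\<phi> \<in> Kchar P \<Longrightarrow> s \<in> Loc P \<Longrightarrow> \<phi> (1, s) \<ge> 0"
  using KcharD(5)[OF _ bdloc_inverse] P_1 unfolding frac_le_def by simp

lemma Kchar_self: 
  assumes "\<phi> \<in> Kchar P" "s \<in> Loc P"
  shows "\<phi> (s, s) = 1"
  using KcharD(1)[OF assms(1) bdloc_self[OF assms(2)] bdloc_1] KcharD(2)[OF assms(1)]
  by (simp add: frac_eq_def)

lemma Kchar_inverse_factor:
  assumes \<phi>: "\<phi> \<in> Kchar P" and s: "s \<in> Loc P" and st: "(s, t) \<in> bdloc P"
  shows "\<phi> (1, t) = \<phi> (s, t) * \<phi> (1, s)"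
proof -
  have "frac_eq (frac_mult (s, t) (1, s)) (1, t)"
    unfolding frac_eq_def frac_mult_def by (simp add: ac_simps)
  then show ?thesis
    using KcharD(1)[OF \<phi> bdloc_mult[OF st bdloc_inverse[OF s]] bdloc_inverse[OF bdloc_Loc[OF st]]]
      KcharD(4)[OF \<phi> st bdloc_inverse[OF s]]
    by simp
qed

lemma Oinf_subset:
  assumes s: "s \<in> Loc P" and st: "(s, t) \<in> bdloc P"
  shows "Oinf P t \<subseteq> Oinf P s"
proof
  fix \<phi> assume "\<phi> \<in> Oinf P t"
  then have \<phi>: "\<phi> \<in> Kchar P" "\<phi> (1, t) > 0" unfolding Oinf_def by auto
  then have "\<phi> (1, s) \<noteq> 0" using Kchar_inverse_factor[OF \<phi>(1) s st] by auto
  with \<phi> show "\<phi> \<in> Oinf P s" using Kchar_inverse_nonneg[OF \<phi>(1) s] unfolding Oinf_def by simp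
qed

lemma rt_self: "\<phi> \<in> Kchar P \<Longrightarrow> s \<in> Loc P \<Longrightarrow> rt s s \<phi> = inverse (\<phi> (1, s))"
  unfolding rt_def using Kchar_self by simp

lemma rt_eq_rt_self:
  assumes \<phi>: "\<phi> \<in> Oinf P t" and s: "s \<in> Loc P" and st: "(s, t) \<in> bdloc P"
  shows "rt s t \<phi> = rt s s \<phi>"
proof -
  have \<phi>K: "\<phi> \<in> Kchar P" and pos: "\<phi> (1, t) > 0" using \<phi> unfolding Oinf_def by auto
  have "\<phi> (1, t) = \<phi> (s, t) * \<phi> (1, s)" by (rule Kchar_inverse_factor[OF \<phi>K s st])
  with pos show ?thesis unfolding rt_def using Kchar_self[OF \<phi>K s] by (auto simp: field_simps)
qed

lemma continuous_map_rt_self: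
  "continuous_map (subtopology (Ktop P) (Oinf P s)) euclideanreal (rt s s)"
  unfolding rt_def
  by (intro continuous_map_real_mult continuous_map_real_inverse continuous_map_from_subtopology
      continuous_map_Ktop_eval) (auto simp: Oinf_def)

lemma representative_extended_by_rt_self:
  assumes s: "s \<in> Loc P" and st: "(s, t) \<in> bdloc P"
    and rep: "ae_rep (Ktop P) (V, g)" and eq: "ae_eq (Ktop P) (V, g) (Oinf P t, rt s t)"
  shows "V \<subseteq> Oinf P s \<and> (\<forall>\<phi>\<in>V. rt s s \<phi> = g \<phi>)"
proof -
  have V: "openin (Ktop P) V" and g: "continuous_map (subtopology (Ktop P) V) euclideanreal g"
    using rep unfolding ae_rep_def by auto
  obtain W where W: "W \<subseteq> V \<inter> Oinf P t" "subtopology (Ktop P) (V \<inter> Oinf P t) closure_of W = V \<inter> Oinf P t"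
    "\<forall>\<phi>\<in>W. g \<phi> = rt s t \<phi>"
    using eq unfolding ae_eq_def by auto
  have t: "t \<in> Loc P" using bdloc_Loc[OF st] by simp
  have dense: "subtopology (Ktop P) V closure_of W = V"
    using subtopology_closure_of_dense_Int[OF V dense_Oinf[OF t] W(1,2)] .
  have gW: "\<phi> (1, s) > 0 \<and> g \<phi> = inverse (\<phi> (1, s))" if "\<phi> \<in> W" for \<phi>
    using that W(1,3) Oinf_subset[OF s st] rt_eq_rt_self[OF _ s st] rt_self[OF _ s]
    by (auto simp: Oinf_def)
  have VK: "V \<subseteq> Kchar P" using openin_subset[OF V] unfolding topspace_Ktop .
  have VO: "V \<subseteq> Oinf P s"
  proof
    fix \<phi> assume "\<phi> \<in> V"
    then have "\<phi> (1, s) \<noteq> 0"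
      using nonzero_if_inverse_continuous[where h = "\<lambda>\<phi>. \<phi> (1, s)", OF g dense
            continuous_map_Ktop_eval gW] by simp
    then show "\<phi> \<in> Oinf P s"
      using VK \<open>\<phi> \<in> V\<close> Kchar_inverse_nonneg[OF _ s] unfolding Oinf_def by force
  qed
  have "rt s s \<phi> = g \<phi>" if "\<phi> \<in> V" for \<phi>
  proof (rule forall_in_closure_of_eq[where X = "subtopology (Ktop P) V" and S = W and Y = euclideanreal
        and f = "rt s s" and g = g])
    show "\<phi> \<in> subtopology (Ktop P) V closure_of W" using dense that by simp
    show "continuous_map (subtopology (Ktop P) V) euclideanreal (rt s s)"
      using continuous_map_from_subtopology_mono[OF continuous_map_rt_self VO] .
    show "rt s s \<psi> = g \<psi>" if "\<psi> \<in> W" for \<psi>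
      using gW[OF that] rt_self[of \<psi> s] s W(1) VK that by auto
  qed (use g in auto)
  with VO show ?thesis by blast
qed

theorem Oinf_eq_ae_max_dom:
  assumes s: "s \<in> Loc P"
  shows "Oinf P s = ae_max_dom (Ktop P) (hat_rep P s)"
proof -
  define t where "t = (SOME t. t \<in> Loc P \<and> (s, t) \<in> bdloc P)"
  have "t \<in> Loc P \<and> (s, t) \<in> bdloc P"
    unfolding t_def by (rule someI[of _ s]) (use s bdloc_self in blast)
  then have st: "(s, t) \<in> bdloc P" by blast
  have hat: "hat_rep P s = (Oinf P t, rt s t)" unfolding hat_rep_def t_def Let_def ..
  have "ae_max_dom (Ktop P) (Oinf P t, rt s t) = Oinf P s"
  proof (rule ae_max_dom_eqI)
    show "ae_rep (Ktop P) (Oinf P s, rt s s)"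
      unfolding ae_rep_def using openin_Oinf dense_Oinf[OF s] continuous_map_rt_self by simp
    show "ae_eq (Ktop P) (Oinf P s, rt s s) (Oinf P t, rt s t)"
      using openin_Oinf Oinf_subset[OF s st] rt_eq_rt_self[OF _ s st] by (intro ae_eq_restrict) auto
  qed (use representative_extended_by_rt_self[OF s st] in blast)
  then show ?thesis unfolding hat ..
qed

end

theorem lemma34:
  fixes P :: "'a::comm_ring_1 set" and s :: 'a
  assumes "po_cring P" and "archimedean_cone P" and "localizable P" and "s \<in> Loc P"
  shows "Oinf P s = ae_max_dom (Ktop P) (hat_rep P s)"
proof -
  interpret archimedean_localizable P
    using assms(1-3) by unfold_locales
  show ?thesis using Oinf_eq_ae_max_dom[OF assms(4)] .
qed

end
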